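(* Let $G$ be a finite simple graph on $[d]$. Then: (a) for $I\in\{\langle [I_G]_2\rangle, J_G, L_G\}$, $I$ is a prime ideal if and only if $I=I_G$; (b) $I_G=\langle [I_G]_2\rangle$ if and only if $I_G$ is generated by quadratic binomials; (c) $\langle [I_G]_2\rangle=J_G$ if and only if the complement graph $\overline{G}$ has no $3$-cycle; (d) $J_G=L_G$ if and only if $G$ is a complete multipartite graph on a vertex partition $V_1\sqcup\cdots\sqcup V_t$ with $|V_j|\le 3$ for every $j$.
   Context: A stable set of $G$ is a subset of $[d]$ with no edge of $G$ (including $\emptyset$ and singletons); $S(G)$ is the set of stable sets; $R[G]=\mathbb{K}[x_S : S\in S(G)]$ over a field $\mathbb{K}$, all variables of degree $1$. $I_G$ is the kernel of $\pi:R[G]\to\mathbb{K}[t_1,\dots,t_d,s]$, $\pi(x_S)=s\prod_{j\in S}t_j$ (a binomial $\prod x_{S_i}-\prod x_{T_i}$ of equal degree lies in $I_G$ iff the multiset unions of the $S_i$ and of the $T_i$ coincide). $\langle [I_G]_2\rangle$ is the ideal generated by the degree-$2$ homogeneous elements of $I_G$. $J_G$ is the ideal generated by all $x_{S_1}x_{S_2}-x_{S_3}x_{S_4}$ with $S_i\in S(G)$, $S_1\cap S_2=S_3\cap S_4=\emptyset$, $S_1\cup S_2=S_3\cup S_4$. $L_G=\langle x_{S\setminus\{i\}}x_{\{i\}}-x_Sx_\emptyset : i\in S\in S(G),\ |S|\ge2\rangle$. By convention, "$I_G$ is generated by quadratic binomials" includes the case $I_G=\{0\}$. A complete multipartite graph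 on $V_1\sqcup\dots\sqcup V_t$ has an edge between two vertices iff they lie in different parts. *)

theory Defs
  imports "HOL-Library.Poly_Mapping" "HOL-Library.Disjoint_Sets"
begin

definition simple_graph_on :: "nat \<Rightarrow> nat set set \<Rightarrow> bool" where
  "simple_graph_on d E \<longleftrightarrow>
     (\<forall>e\<in>E. \<exists>i j. e = {i, j} \<and> i \<noteq> j \<and> i \<in> {1..d} \<and> j \<in> {1..d})"

definition stable_sets :: "nat \<Rightarrow> nat set set \<Rightarrow> nat set set" where
  "stable_sets d E = {S. S \<subseteq> {1..d} \<and> (\<forall>e\<in>E. \<not> e \<subseteq> S)}"

definition complement_has_triangle :: "nat \<Rightarrow> nat set set \<Rightarrow> bool" where
  "complement_has_triangle d E \<longleftrightarrow>
     (\<exists>a b c. a \<in> {1..d} \<and> b \<in> {1..d} \<and> c \<in> {1..d} \<and> a \<noteq> b \<and> b \<noteq> c \<and> a \<noteq> c \<and>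
              {a, b} \<notin> E \<and> {b, c} \<notin> E \<and> {a, c} \<notin> E)"

definition complete_multipartite_wrt :: "nat \<Rightarrow> nat set set \<Rightarrow> nat set set \<Rightarrow> bool" where
  "complete_multipartite_wrt d E P \<longleftrightarrow> partition_on {1..d} P \<and>
     (\<forall>i\<in>{1..d}. \<forall>j\<in>{1..d}. i \<noteq> j \<longrightarrow>
        ({i, j} \<in> E \<longleftrightarrow> \<not> (\<exists>V\<in>P. i \<in> V \<and> j \<in> V)))"

type_synonym ('v, 'k) mpoly = "('v \<Rightarrow>\<^sub>0 nat) \<Rightarrow>\<^sub>0 'k"

definition var :: "'v \<Rightarrow> ('v, 'k::{zero,one}) mpoly" where
  "var v = Poly_Mapping.single (Poly_Mapping.single v 1) 1"

definition monom_deg :: "('v \<Rightarrow>\<^sub>0 nat) \<Rightarrow> nat" where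
  "monom_deg m = (\<Sum>v\<in>Poly_Mapping.keys m. Poly_Mapping.lookup m v)"

definition homogeneous_of_deg :: "nat \<Rightarrow> ('v, 'k::zero) mpoly \<Rightarrow> bool" where
  "homogeneous_of_deg n p \<longleftrightarrow> (\<forall>m\<in>Poly_Mapping.keys p. monom_deg m = n)"

definition poly_ring :: "'v set \<Rightarrow> ('v, 'k::zero) mpoly set" where
  "poly_ring V = {p. \<forall>m\<in>Poly_Mapping.keys p. Poly_Mapping.keys m \<subseteq> V}"

definition ideal_gen :: "'a::comm_ring_1 set \<Rightarrow> 'a set \<Rightarrow> 'a set" where
  "ideal_gen R B = {p. \<exists>F r. finite F \<and> F \<subseteq> B \<and> (\<forall>g\<in>F. r g \<in> R) \<and> p = (\<Sum>g\<in>F. r g * g)}"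

definition is_ideal_in :: "'a::comm_ring_1 set \<Rightarrow> 'a set \<Rightarrow> bool" where
  "is_ideal_in R I \<longleftrightarrow> I \<subseteq> R \<and> 0 \<in> I \<and> (\<forall>a\<in>I. \<forall>b\<in>I. a + b \<in> I) \<and>
     (\<forall>r\<in>R. \<forall>a\<in>I. r * a \<in> I)"

definition prime_ideal_in :: "'a::comm_ring_1 set \<Rightarrow> 'a set \<Rightarrow> bool" where
  "prime_ideal_in R I \<longleftrightarrow> is_ideal_in R I \<and> I \<noteq> R \<and>
     (\<forall>a\<in>R. \<forall>b\<in>R. a * b \<in> I \<longrightarrow> a \<in> I \<or> b \<in> I)"

text \<open>Variables x_S are indexed by the stable set S itself.\<close>
definition RG :: "nat \<Rightarrow> nat set set \<Rightarrow> (nat set, 'k::zero) mpoly set" where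
  "RG d E = poly_ring (stable_sets d E)"

text \<open>Target ring K[t_1,...,t_d,s]: variable Some j is t_j, variable None is s.
  Image of a monomial prod x_S^(a_S) under x_S |-> s * prod_{j in S} t_j.\<close>
definition mono_img :: "(nat set \<Rightarrow>\<^sub>0 nat) \<Rightarrow> (nat option \<Rightarrow>\<^sub>0 nat)" where
  "mono_img m = (\<Sum>S\<in>Poly_Mapping.keys m. Poly_Mapping.single None (Poly_Mapping.lookup m S) +
                              (\<Sum>j\<in>S. Poly_Mapping.single (Some j) (Poly_Mapping.lookup m S)))"

definition piG :: "(nat set, 'k::comm_ring_1) mpoly \<Rightarrow> (nat option, 'k) mpoly" where
  "piG p = (\<Sum>m\<in>Poly_Mapping.keys p. Poly_Mapping.single (mono_img m) (Poly_Mapping.lookup p m))"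

definition IG :: "nat \<Rightarrow> nat set set \<Rightarrow> (nat set, 'k::comm_ring_1) mpoly set" where
  "IG d E = {p \<in> RG d E. piG p = 0}"

definition IG2 :: "nat \<Rightarrow> nat set set \<Rightarrow> (nat set, 'k::comm_ring_1) mpoly set" where
  "IG2 d E = ideal_gen (RG d E) {p \<in> IG d E. homogeneous_of_deg 2 p}"

definition JG :: "nat \<Rightarrow> nat set set \<Rightarrow> (nat set, 'k::comm_ring_1) mpoly set" where
  "JG d E = ideal_gen (RG d E)
     {var S1 * var S2 - var S3 * var S4 | S1 S2 S3 S4.
        S1 \<in> stable_sets d E \<and> S2 \<in> stable_sets d E \<and> S3 \<in> stable_sets d E \<and> S4 \<in> stable_sets d E \<and>
        S1 \<inter> S2 = {} \<and> S3 \<inter> S4 = {} \<and> S1 \<union> S2 = S3 \<union> S4}"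

definition LG :: "nat \<Rightarrow> nat set set \<Rightarrow> (nat set, 'k::comm_ring_1) mpoly set" where
  "LG d E = ideal_gen (RG d E)
     {var (S - {i}) * var {i} - var S * var {} | i S.
        S \<in> stable_sets d E \<and> i \<in> S \<and> card S \<ge> 2}"

definition quadratic_binomials :: "nat \<Rightarrow> nat set set \<Rightarrow> (nat set, 'k::comm_ring_1) mpoly set" where
  "quadratic_binomials d E =
     {var S1 * var S2 - var S3 * var S4 | S1 S2 S3 S4.
        S1 \<in> stable_sets d E \<and> S2 \<in> stable_sets d E \<and> S3 \<in> stable_sets d E \<and> S4 \<in> stable_sets d E}"

definition generated_by_quadratic_binomials :: "nat \<Rightarrow> nat set set \<Rightarrow> (nat set, 'k::comm_ring_1) mpoly set \<Rightarrow> bool" where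
  "generated_by_quadratic_binomials d E I \<longleftrightarrow>
     (\<exists>B \<subseteq> quadratic_binomials d E. I = ideal_gen (RG d E) B)"

end

theory Submission
  imports Defs "HOL-Library.Option_ord" "HOL-Library.Multiset"
begin

text \<open>
  For every graph L_G \<subseteq> J_G \<subseteq> <[I_G]_2> \<subseteq> I_G, and I_G is prime, being the kernel of a map into a
  domain. Modulo L_G a variable x_S can be traded for x_\<emptyset> times the x_{j} with j in S at the cost
  of a power of x_\<emptyset>; hence x_\<emptyset>^N f \<in> L_G for every f \<in> I_G, and as x_\<emptyset> \<notin> I_G, every prime ideal
  between L_G and I_G is I_G.

  The kernel of a monomial map is spanned by the binomials of monomials with equal image, so
  <[I_G]_2> is generated by the binomials x_S1 x_S2 - x_S3 x_S4 with S1 \<uplus> S2 = S3 \<uplus> S4, which gives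
  (b). Such a binomial lies in J_G if S1 \<inter> S2 = {}, and vanishes if S1 \<inter> S2 \<noteq> {} and no stable set
  has three elements; a stable set {a, b, c} gives x_ab x_ac - x_a x_abc, whose first monomial
  occurs in no generator of J_G.

  For (d), J_G \<subseteq> L_G as soon as non-adjacency is transitive and stable sets have at most three
  elements, which is exactly complete multipartiteness with parts of size at most three.
  Otherwise a path a - b - c of non-edges with ac an edge, or four independent vertices, give a
  generator of J_G whose first monomial occurs in no generator of L_G.
\<close>

definition monom :: "('v \<Rightarrow>\<^sub>0 nat) \<Rightarrow> ('v, 'k::{zero,one}) mpoly" where
  "monom m = Poly_Mapping.single m 1"

definition pushforward :: "('a \<Rightarrow> 'b) \<Rightarrow> ('a \<Rightarrow>\<^sub>0 'c::comm_monoid_add) \<Rightarrow> 'b \<Rightarrow>\<^sub>0 'c" where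
  "pushforward f p = (\<Sum>m\<in>Poly_Mapping.keys p. Poly_Mapping.single (f m) (Poly_Mapping.lookup p m))"

lemma pushforward_eq_sum_superset:
  assumes "finite A" "Poly_Mapping.keys p \<subseteq> A"
  shows "pushforward f p = (\<Sum>m\<in>A. Poly_Mapping.single (f m) (Poly_Mapping.lookup p m))"
  unfolding pushforward_def
  by (rule sum.mono_neutral_left) (use assms in \<open>auto simp: in_keys_iff\<close>)

lemma pushforward_add: "pushforward f (p + q) = pushforward f p + pushforward f q"
proof -
  let ?A = "Poly_Mapping.keys p \<union> Poly_Mapping.keys q"
  have "pushforward f (p + q) =
      (\<Sum>m\<in>?A. Poly_Mapping.single (f m) (Poly_Mapping.lookup (p + q) m))"
    by (rule pushforward_eq_sum_superset) (auto dest: set_mp[OF keys_add])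
  also have "\<dots> = (\<Sum>m\<in>?A. Poly_Mapping.single (f m) (Poly_Mapping.lookup p m))
      + (\<Sum>m\<in>?A. Poly_Mapping.single (f m) (Poly_Mapping.lookup q m))"
    by (simp add: lookup_add single_add sum.distrib)
  also have "\<dots> = pushforward f p + pushforward f q"
    by (subst (1 2) pushforward_eq_sum_superset[of ?A]) auto
  finally show ?thesis .
qed

lemma pushforward_zero [simp]: "pushforward f 0 = 0"
  by (simp add: pushforward_def)

lemma pushforward_single [simp]:
  "pushforward f (Poly_Mapping.single m c) = Poly_Mapping.single (f m) c"
  by (simp add: pushforward_def)

lemma pushforward_sum: "pushforward f (sum g A) = (\<Sum>a\<in>A. pushforward f (g a))"
  by (induction A rule: infinite_finite_induct) (auto simp: pushforward_add)

lemma pushforward_diff: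
  "pushforward f ((p :: 'a \<Rightarrow>\<^sub>0 'c::ab_group_add) - q) = pushforward f p - pushforward f q"
  by (metis add_diff_cancel pushforward_add diff_add_cancel)

lemma poly_mapping_sum_single:
  "(\<Sum>m\<in>Poly_Mapping.keys p. Poly_Mapping.single m (Poly_Mapping.lookup p m)) = p"
proof (rule poly_mapping_eqI)
  fix k
  show "Poly_Mapping.lookup (\<Sum>m\<in>Poly_Mapping.keys p. Poly_Mapping.single m (Poly_Mapping.lookup p m)) k
      = Poly_Mapping.lookup p k"
    by (cases "k \<in> Poly_Mapping.keys p") (auto simp: lookup_sum lookup_single when_def in_keys_iff)
qed

lemma pushforward_comp: "pushforward f (pushforward g p) = pushforward (f \<circ> g) p"
  by (simp add: pushforward_def[of g] pushforward_sum) (simp add: pushforward_def)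

lemma pushforward_mult:
  fixes p q :: "'a::comm_monoid_add \<Rightarrow>\<^sub>0 'c::comm_semiring_1"
  assumes additive: "\<And>a b. f (a + b) = f a + f b"
  shows "pushforward f (p * q) = pushforward f p * pushforward f q"
proof -
  have "p * q = (\<Sum>a\<in>Poly_Mapping.keys p. \<Sum>b\<in>Poly_Mapping.keys q.
      Poly_Mapping.single (a + b) (Poly_Mapping.lookup p a * Poly_Mapping.lookup q b))"
    by (subst (1) poly_mapping_sum_single[of p, symmetric], subst (1) poly_mapping_sum_single[of q, symmetric])
       (simp add: sum_product mult_single)
  then show ?thesis
    by (simp add: pushforward_sum additive pushforward_def[of f p] pushforward_def[of f q]
        sum_product mult_single)
qed

lemma monom_add: "monom (a + b) = (monom a * monom b :: ('v, 'k::comm_semiring_1) mpoly)"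
  by (simp add: monom_def mult_single)

lemma monom_zero [simp]: "monom 0 = (1 :: ('v, 'k::comm_semiring_1) mpoly)"
  by (simp add: monom_def)

lemma var_eq_monom: "var v = monom (Poly_Mapping.single v 1)"
  by (simp add: var_def monom_def)

lemma var_mult_var:
  "var v * var w = (monom (Poly_Mapping.single v 1 + Poly_Mapping.single w 1) :: ('v, 'k::comm_semiring_1) mpoly)"
  by (simp add: var_eq_monom monom_add)

lemma monom_sum: "monom (sum f A) = (\<Prod>a\<in>A. monom (f a) :: ('v, 'k::comm_semiring_1) mpoly)"
  by (induction A rule: infinite_finite_induct) (simp_all add: monom_add)

lemma lookup_monom_diff_monom:
  "M' \<noteq> M \<Longrightarrow> Poly_Mapping.lookup (monom M - monom M' :: ('v, 'k::comm_ring_1) mpoly) M = 1"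
  by (simp add: lookup_minus monom_def lookup_single)

lemma monom_deg_add: "monom_deg (a + b) = monom_deg a + monom_deg b"
  unfolding monom_deg_def by (rule setsum_keys_plus_distrib) auto

lemma monom_deg_single [simp]: "monom_deg (Poly_Mapping.single v k) = k"
  by (simp add: monom_deg_def)

lemma monom_deg_eq_0_iff [simp]: "monom_deg m = 0 \<longleftrightarrow> m = 0"
  unfolding monom_deg_def by (auto simp: in_keys_iff intro!: poly_mapping_eqI)

lemma monomial_split:
  fixes m :: "'v \<Rightarrow>\<^sub>0 nat"
  assumes "v \<in> Poly_Mapping.keys m"
  shows "m = Poly_Mapping.single v 1 + (m - Poly_Mapping.single v 1)"
    and "Poly_Mapping.keys (m - Poly_Mapping.single v 1) \<subseteq> Poly_Mapping.keys m"
proof -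
  have "Poly_Mapping.lookup m v \<ge> 1" using assms by (simp add: in_keys_iff)
  then show "m = Poly_Mapping.single v 1 + (m - Poly_Mapping.single v 1)"
    by (intro poly_mapping_eqI) (auto simp: lookup_add lookup_minus lookup_single when_def)
  show "Poly_Mapping.keys (m - Poly_Mapping.single v 1) \<subseteq> Poly_Mapping.keys m"
    by (auto simp: in_keys_iff lookup_minus)
qed

lemma monomial_induct [consumes 1, case_names zero add_var]:
  fixes m :: "'v \<Rightarrow>\<^sub>0 nat"
  assumes "Poly_Mapping.keys m \<subseteq> V" and "P 0"
    and add_var: "\<And>v m. v \<in> V \<Longrightarrow> Poly_Mapping.keys m \<subseteq> V \<Longrightarrow> P m \<Longrightarrow> P (Poly_Mapping.single v 1 + m)"
  shows "P m"
  using assms(1)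
proof (induction "monom_deg m" arbitrary: m rule: less_induct)
  case less
  show ?case
  proof (cases "m = 0")
    case True
    then show ?thesis using \<open>P 0\<close> by simp
  next
    case False
    then obtain v where v: "v \<in> Poly_Mapping.keys m" by fastforce
    let ?m' = "m - Poly_Mapping.single v 1"
    note split = monomial_split[OF v]
    have "monom_deg ?m' < monom_deg m"
      using split(1) monom_deg_add[of "Poly_Mapping.single v 1" ?m'] by simp
    then have "P ?m'" using less split(2) by blast
    then show ?thesis using add_var[of v ?m'] split less.prems v by auto
  qed
qed

lemma monom_deg_eq_2_iff:
  "monom_deg m = 2 \<longleftrightarrow> (\<exists>v w. m = Poly_Mapping.single v 1 + Poly_Mapping.single w 1)"
proof
  assume deg: "monom_deg m = 2"
  then obtain v where v: "v \<in> Poly_Mapping.keys m"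
    by (metis keys_eq_empty ex_in_conv monom_deg_eq_0_iff zero_neq_numeral)
  let ?m' = "m - Poly_Mapping.single v 1"
  note split = monomial_split[OF v]
  have "monom_deg ?m' = 1" using deg split(1) monom_deg_add[of "Poly_Mapping.single v 1" ?m'] by simp
  then obtain w where w: "w \<in> Poly_Mapping.keys ?m'"
    by (metis keys_eq_empty ex_in_conv monom_deg_eq_0_iff zero_neq_one)
  define u where "u = ?m' - Poly_Mapping.single w 1"
  have m': "?m' = Poly_Mapping.single w 1 + u"
    unfolding u_def by (rule monomial_split(1)[OF w])
  have "monom_deg ?m' = 1 + monom_deg u"
    by (subst m') (simp add: monom_deg_add)
  then have "u = 0" using \<open>monom_deg ?m' = 1\<close> by simp
  then show "\<exists>v w. m = Poly_Mapping.single v 1 + Poly_Mapping.single w 1"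
    using split(1) m' by auto
qed (auto simp: monom_deg_add)

lemma single_1_add_single_1_eq_iff:
  "Poly_Mapping.single a (1::nat) + Poly_Mapping.single b 1 = Poly_Mapping.single c 1 + Poly_Mapping.single e 1
    \<longleftrightarrow> (a = c \<and> b = e) \<or> (a = e \<and> b = c)"
proof
  assume eq: "Poly_Mapping.single a (1::nat) + Poly_Mapping.single b 1 = Poly_Mapping.single c 1 + Poly_Mapping.single e 1"
  have "(1 when a = k) + (1 when b = k) = ((1::nat) when c = k) + (1 when e = k)" for k
    using arg_cong[OF eq, of "\<lambda>m. Poly_Mapping.lookup m k"] by (simp add: lookup_add lookup_single)
  from this[of a] this[of b] this[of c] this[of e]
  show "(a = c \<and> b = e) \<or> (a = e \<and> b = c)" by (auto simp: when_def split: if_splits)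
qed (auto simp: add.commute)

lemma keys_single_1_add_single_1:
  "Poly_Mapping.keys (Poly_Mapping.single a (1::nat) + Poly_Mapping.single b 1) = {a, b}"
  by (auto simp: in_keys_iff lookup_add lookup_single when_def split: if_splits)

lemma lookup_mult_monom_eq_0:
  fixes r :: "('v, 'k::comm_ring_1) mpoly"
  assumes "monom_deg M' = monom_deg M" "M' \<noteq> M"
  shows "Poly_Mapping.lookup (r * monom M') M = 0"
proof -
  have "a + M' \<noteq> M" for a
    using assms monom_deg_add[of a M'] by (metis add_0 add_right_imp_eq monom_deg_eq_0_iff)
  moreover have "r * monom M' =
      (\<Sum>a\<in>Poly_Mapping.keys r. Poly_Mapping.single (a + M') (Poly_Mapping.lookup r a))"
    by (subst (1) poly_mapping_sum_single[of r, symmetric]) (simp add: sum_distrib_right monom_def mult_single)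
  ultimately show ?thesis by (simp add: lookup_sum lookup_single)
qed

lemma subsingleton_mset_set_pair_eq:
  assumes "card T1 \<le> 1" "card T2 \<le> 1" "card T3 \<le> 1" "card T4 \<le> 1"
    "finite T1" "finite T2" "finite T3" "finite T4"
    and "mset_set T1 + mset_set T2 = mset_set T3 + mset_set T4"
  shows "(T1 = T3 \<and> T2 = T4) \<or> (T1 = T4 \<and> T2 = T3)"
proof -
  have subsingleton: "T = {} \<or> (\<exists>x. T = {x})" if "card T \<le> 1" "finite T" for T :: "'a set"
    using that by (metis card_0_eq card_1_singletonE le_Suc_eq One_nat_def le_zero_eq)
  from subsingleton[OF assms(1,5)] subsingleton[OF assms(2,6)] subsingleton[OF assms(3,7)]
    subsingleton[OF assms(4,8)] assms(9)
  show ?thesis by (elim disjE exE; simp add: add_eq_conv_ex) blast+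
qed

lemma mset_set_pair_eq_overlapping:
  assumes fin: "finite S1" "finite S2" "finite S3" "finite S4"
    and card: "card S1 \<le> 2" "card S2 \<le> 2" "card S3 \<le> 2" "card S4 \<le> 2"
    and a: "a \<in> S1" "a \<in> S2"
    and eq: "mset_set S1 + mset_set S2 = mset_set S3 + mset_set S4"
  shows "(S1 = S3 \<and> S2 = S4) \<or> (S1 = S4 \<and> S2 = S3)"
proof -
  have "count (mset_set S3 + mset_set S4) a = 2"
    using fin a by (simp flip: eq)
  then have a34: "a \<in> S3" "a \<in> S4" using fin by (auto simp: count_mset_set' split: if_splits)
  have remove: "mset_set S = add_mset a (mset_set (S - {a}))" if "finite S" "a \<in> S" for S
    using that by (simp add: mset_set.remove)
  have "mset_set (S1 - {a}) + mset_set (S2 - {a}) = mset_set (S3 - {a}) + mset_set (S4 - {a})"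
    using eq fin a a34 by (simp add: remove)
  moreover have "card (S - {a}) \<le> 1" "finite (S - {a})" if "finite S" "card S \<le> 2" "a \<in> S" for S
    using that by simp_all
  ultimately have "(S1 - {a} = S3 - {a} \<and> S2 - {a} = S4 - {a}) \<or> (S1 - {a} = S4 - {a} \<and> S2 - {a} = S3 - {a})"
    using fin card a a34 by (intro subsingleton_mset_set_pair_eq) auto
  then show ?thesis using a a34 by (metis insert_Diff)
qed

lemma mset_set_pair_eq_disjoint:
  assumes fin: "finite S1" "finite S2" "finite S3" "finite S4"
    and disj: "S1 \<inter> S2 = {}" and eq: "mset_set S1 + mset_set S2 = mset_set S3 + mset_set S4"
  shows "S3 \<inter> S4 = {}" and "S1 \<union> S2 = S3 \<union> S4"
proof -
  show "S1 \<union> S2 = S3 \<union> S4"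
    using arg_cong[OF eq, of set_mset] fin by simp
  show "S3 \<inter> S4 = {}"
  proof (rule ccontr)
    assume "S3 \<inter> S4 \<noteq> {}"
    then obtain j where "j \<in> S3" "j \<in> S4" by blast
    then have "count (mset_set S1 + mset_set S2) j = 2" using fin by (simp add: eq)
    then show False using fin disj by (auto simp: count_mset_set' split: if_splits)
  qed
qed

definition is_subring :: "'a::comm_ring_1 set \<Rightarrow> bool" where
  "is_subring R \<longleftrightarrow> 0 \<in> R \<and> 1 \<in> R \<and> (\<forall>a\<in>R. - a \<in> R) \<and> (\<forall>a\<in>R. \<forall>b\<in>R. a + b \<in> R \<and> a * b \<in> R)"

lemma subring_sum: "is_subring R \<Longrightarrow> (\<And>a. a \<in> A \<Longrightarrow> f a \<in> R) \<Longrightarrow> sum f A \<in> R"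
  by (induction A rule: infinite_finite_induct) (auto simp: is_subring_def)

lemma subring_prod: "is_subring R \<Longrightarrow> (\<And>a. a \<in> A \<Longrightarrow> f a \<in> R) \<Longrightarrow> prod f A \<in> R"
  by (induction A rule: infinite_finite_induct) (auto simp: is_subring_def)

lemma subring_power: "is_subring R \<Longrightarrow> a \<in> R \<Longrightarrow> a ^ n \<in> R"
  by (induction n) (auto simp: is_subring_def)

lemma subring_mult: "is_subring R \<Longrightarrow> a \<in> R \<Longrightarrow> b \<in> R \<Longrightarrow> a * b \<in> R"
  by (simp add: is_subring_def)

lemma subring_diff: "is_subring R \<Longrightarrow> a \<in> R \<Longrightarrow> b \<in> R \<Longrightarrow> a - b \<in> R"
  unfolding is_subring_def by (metis diff_conv_add_uminus)

lemma ideal_sum: "is_ideal_in R I \<Longrightarrow> (\<And>a. a \<in> A \<Longrightarrow> f a \<in> I) \<Longrightarrow> sum f A \<in> I"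
  by (induction A rule: infinite_finite_induct) (auto simp: is_ideal_in_def)

lemma ideal_mult: "is_ideal_in R I \<Longrightarrow> r \<in> R \<Longrightarrow> a \<in> I \<Longrightarrow> r * a \<in> I"
  by (simp add: is_ideal_in_def)

lemma ideal_diff:
  assumes "is_subring R" "is_ideal_in R I" "a \<in> I" "b \<in> I"
  shows "a - b \<in> I"
proof -
  have "- 1 \<in> R" using assms(1) by (simp add: is_subring_def)
  then have "(- 1) * b \<in> I" using assms(2,4) by (intro ideal_mult)
  then show ?thesis using assms(2,3) unfolding is_ideal_in_def by (metis diff_conv_add_uminus mult_minus1)
qed

lemma ideal_mult_congruence:
  assumes "is_ideal_in R I" "a - b \<in> I" "a' - b' \<in> I" "a' \<in> R" "b \<in> R"
  shows "a * a' - b * b' \<in> I"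
proof -
  have "a * a' - b * b' = a' * (a - b) + b * (a' - b')" by (simp add: algebra_simps)
  then show ?thesis using assms by (auto simp: is_ideal_in_def)
qed

lemma ideal_genI:
  "finite F \<Longrightarrow> F \<subseteq> B \<Longrightarrow> \<forall>g\<in>F. r g \<in> R \<Longrightarrow> (\<Sum>g\<in>F. r g * g) \<in> ideal_gen R B"
  unfolding ideal_gen_def by blast

lemma ideal_genE:
  assumes "p \<in> ideal_gen R B"
  obtains F r where "finite F" "F \<subseteq> B" "\<forall>g\<in>F. r g \<in> R" "p = (\<Sum>g\<in>F. r g * g)"
  using assms unfolding ideal_gen_def by blast

lemma ideal_gen_mono: "B \<subseteq> C \<Longrightarrow> ideal_gen R B \<subseteq> ideal_gen R C"
  unfolding ideal_gen_def by blast

lemma ideal_gen_base: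
  assumes "is_subring R" "g \<in> B"
  shows "g \<in> ideal_gen R B"
  using ideal_genI[of "{g}" B "\<lambda>_. 1" R] assms by (simp add: is_subring_def)

lemma ideal_gen_least:
  assumes "is_ideal_in R I" "B \<subseteq> I"
  shows "ideal_gen R B \<subseteq> I"
proof
  fix p assume "p \<in> ideal_gen R B"
  then obtain F r where "F \<subseteq> B" "\<forall>g\<in>F. r g \<in> R" "p = (\<Sum>g\<in>F. r g * g)"
    by (rule ideal_genE)
  then show "p \<in> I" using assms by (auto intro!: ideal_sum[OF assms(1)] ideal_mult[OF assms(1)])
qed

lemma ideal_gen_add:
  assumes R: "is_subring R" and p: "p \<in> ideal_gen R B" and q: "q \<in> ideal_gen R B"
  shows "p + q \<in> ideal_gen R B"
proof -
  obtain F r where F: "finite F" "F \<subseteq> B" "\<forall>g\<in>F. r g \<in> R" "p = (\<Sum>g\<in>F. r g * g)"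
    using p by (rule ideal_genE)
  obtain G s where G: "finite G" "G \<subseteq> B" "\<forall>g\<in>G. s g \<in> R" "q = (\<Sum>g\<in>G. s g * g)"
    using q by (rule ideal_genE)
  define r' where "r' g = (if g \<in> F then r g else 0)" for g
  define s' where "s' g = (if g \<in> G then s g else 0)" for g
  have "p = (\<Sum>g\<in>F \<union> G. r' g * g)"
    unfolding F(4) r'_def by (rule sum.mono_neutral_cong_left) (use F(1) G(1) in auto)
  moreover have "q = (\<Sum>g\<in>F \<union> G. s' g * g)"
    unfolding G(4) s'_def by (rule sum.mono_neutral_cong_left) (use F(1) G(1) in auto)
  ultimately have "p + q = (\<Sum>g\<in>F \<union> G. (r' g + s' g) * g)"
    by (simp add: sum.distrib distrib_right)
  moreover have "\<forall>g\<in>F \<union> G. r' g + s' g \<in> R"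
    using F(3) G(3) R unfolding r'_def s'_def is_subring_def by auto
  ultimately show ?thesis
    using F(1,2) G(1,2) ideal_genI[of "F \<union> G" B "\<lambda>g. r' g + s' g" R] by simp
qed

lemma ideal_gen_mult:
  assumes R: "is_subring R" and a: "a \<in> R" and p: "p \<in> ideal_gen R B"
  shows "a * p \<in> ideal_gen R B"
proof -
  obtain F r where F: "finite F" "F \<subseteq> B" "\<forall>g\<in>F. r g \<in> R" "p = (\<Sum>g\<in>F. r g * g)"
    using p by (rule ideal_genE)
  have "a * p = (\<Sum>g\<in>F. (a * r g) * g)"
    by (simp add: F(4) sum_distrib_left mult.assoc)
  moreover have "\<forall>g\<in>F. a * r g \<in> R" using F(3) R a by (auto intro: subring_mult)
  ultimately show ?thesis
    using F(1,2) ideal_genI[of F B "\<lambda>g. a * r g" R] by simp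
qed

lemma is_ideal_in_ideal_gen:
  assumes R: "is_subring R" and B: "B \<subseteq> R"
  shows "is_ideal_in R (ideal_gen R B)"
proof -
  have "ideal_gen R B \<subseteq> R"
    using B by (auto simp: ideal_gen_def intro!: subring_sum[OF R] subring_mult[OF R])
  moreover have "0 \<in> ideal_gen R B"
    using ideal_genI[of "{}" B] by simp
  ultimately show ?thesis
    unfolding is_ideal_in_def using ideal_gen_add[OF R] ideal_gen_mult[OF R] by blast
qed

lemma lookup_ideal_gen_binomials_eq_0:
  fixes B :: "('v, 'k::comm_ring_1) mpoly set"
  assumes "p \<in> ideal_gen R B"
    and "\<And>g. g \<in> B \<Longrightarrow> \<exists>M1 M2. g = monom M1 - monom M2 \<and> M1 \<noteq> M \<and> M2 \<noteq> M \<and>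
           monom_deg M1 = monom_deg M \<and> monom_deg M2 = monom_deg M"
  shows "Poly_Mapping.lookup p M = 0"
proof -
  obtain F r where F: "F \<subseteq> B" "p = (\<Sum>g\<in>F. r g * g)"
    using assms(1) by (rule ideal_genE)
  have "Poly_Mapping.lookup (r g * g) M = 0" if g: "g \<in> F" for g
  proof -
    obtain M1 M2 where "g = monom M1 - monom M2" "M1 \<noteq> M" "M2 \<noteq> M"
      "monom_deg M1 = monom_deg M" "monom_deg M2 = monom_deg M"
      using assms(2)[of g] F(1) g by blast
    then show ?thesis by (simp add: right_diff_distrib lookup_minus lookup_mult_monom_eq_0)
  qed
  then show ?thesis by (simp add: F(2) lookup_sum)
qed

lemma quadratic_binomial_notin_ideal_gen:
  fixes B :: "('v, 'k::comm_ring_1) mpoly set"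
  assumes distinct: "\<not> ((A3 = A1 \<and> A4 = A2) \<or> (A3 = A2 \<and> A4 = A1))"
    and avoid: "\<And>g. g \<in> B \<Longrightarrow> \<exists>S1 S2 S3 S4. g = var S1 * var S2 - var S3 * var S4 \<and>
      \<not> ((S1 = A1 \<and> S2 = A2) \<or> (S1 = A2 \<and> S2 = A1)) \<and> \<not> ((S3 = A1 \<and> S4 = A2) \<or> (S3 = A2 \<and> S4 = A1))"
  shows "var A1 * var A2 - var A3 * var A4 \<notin> ideal_gen R B"
proof
  let ?M = "Poly_Mapping.single A1 1 + Poly_Mapping.single A2 (1::nat)"
  assume "var A1 * var A2 - var A3 * var A4 \<in> ideal_gen R B"
  then have "Poly_Mapping.lookup (var A1 * var A2 - var A3 * var A4 :: ('v, 'k) mpoly) ?M = 0"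
  proof (rule lookup_ideal_gen_binomials_eq_0)
    fix g assume "g \<in> B"
    then obtain S1 S2 S3 S4 where g: "g = var S1 * var S2 - var S3 * var S4"
      and "\<not> ((S1 = A1 \<and> S2 = A2) \<or> (S1 = A2 \<and> S2 = A1))" "\<not> ((S3 = A1 \<and> S4 = A2) \<or> (S3 = A2 \<and> S4 = A1))"
      using avoid by blast
    then show "\<exists>M1 M2. g = monom M1 - monom M2 \<and> M1 \<noteq> ?M \<and> M2 \<noteq> ?M \<and>
        monom_deg M1 = monom_deg ?M \<and> monom_deg M2 = monom_deg ?M"
      unfolding g var_mult_var
      by (intro exI[of _ "Poly_Mapping.single S1 1 + Poly_Mapping.single S2 1"]
          exI[of _ "Poly_Mapping.single S3 1 + Poly_Mapping.single S4 1"])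
         (simp add: single_1_add_single_1_eq_iff monom_deg_add del: One_nat_def)
  qed
  moreover have "Poly_Mapping.lookup (var A1 * var A2 - var A3 * var A4 :: ('v, 'k) mpoly) ?M = 1"
    unfolding var_mult_var using distinct
    by (intro lookup_monom_diff_monom) (simp add: single_1_add_single_1_eq_iff del: One_nat_def)
  ultimately show False by simp
qed

definition saturation :: "'a::comm_ring_1 set \<Rightarrow> 'a set \<Rightarrow> 'a \<Rightarrow> 'a set" where
  "saturation R I x = {f \<in> R. \<exists>n. x ^ n * f \<in> I}"

lemma is_ideal_in_saturation:
  assumes R: "is_subring R" and I: "is_ideal_in R I" and x: "x \<in> R"
  shows "is_ideal_in R (saturation R I x)"
  unfolding is_ideal_in_def
proof (intro conjI ballI)
  show "saturation R I x \<subseteq> R" "0 \<in> saturation R I x"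
    using R I by (auto simp: saturation_def is_subring_def is_ideal_in_def)
next
  fix f g assume "f \<in> saturation R I x" "g \<in> saturation R I x"
  then obtain m n where f: "f \<in> R" "x ^ m * f \<in> I" and g: "g \<in> R" "x ^ n * g \<in> I"
    unfolding saturation_def by blast
  have "x ^ (m + n) * (f + g) = x ^ n * (x ^ m * f) + x ^ m * (x ^ n * g)"
    by (simp add: power_add algebra_simps)
  also have "\<dots> \<in> I"
    using I f g R x unfolding is_ideal_in_def by (meson subring_power)
  finally show "f + g \<in> saturation R I x"
    using f g R unfolding saturation_def is_subring_def by blast
next
  fix r f assume r: "r \<in> R" and "f \<in> saturation R I x"
  then obtain n where f: "f \<in> R" "x ^ n * f \<in> I" unfolding saturation_def by blast
  have "x ^ n * (r * f) = r * (x ^ n * f)" by (simp add: algebra_simps)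
  then have "x ^ n * (r * f) \<in> I" using ideal_mult[OF I r f(2)] by metis
  then show "r * f \<in> saturation R I x"
    using r f R unfolding saturation_def by (auto intro: subring_mult)
qed

lemma saturation_subset_prime_ideal:
  assumes R: "is_subring R" and P: "prime_ideal_in R P" and "I \<subseteq> P"
    and x: "x \<in> R" "x \<notin> P"
  shows "saturation R I x \<subseteq> P"
proof
  fix f assume "f \<in> saturation R I x"
  then obtain n where f: "f \<in> R" and "x ^ n * f \<in> P"
    using \<open>I \<subseteq> P\<close> unfolding saturation_def by blast
  then show "f \<in> P"
  proof (induction n)
    case (Suc n)
    have "x * (x ^ n * f) \<in> P" using Suc.prems by (simp add: mult.assoc)
    moreover have "x ^ n * f \<in> R" using R x f by (intro subring_mult subring_power)
    ultimately show ?case using P x Suc.IH f unfolding prime_ideal_in_def by blast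
  qed simp
qed

lemma poly_ring_subring: "is_subring (poly_ring V :: ('v, 'k::comm_ring_1) mpoly set)"
proof -
  have mult: "a * b \<in> poly_ring V" if a: "a \<in> poly_ring V" and b: "b \<in> poly_ring V"
    for a b :: "('v, 'k) mpoly"
  proof -
    have "Poly_Mapping.keys (x + y) \<subseteq> V"
      if "x \<in> Poly_Mapping.keys a" "y \<in> Poly_Mapping.keys b" for x y
      using that a b keys_add[of x y] unfolding poly_ring_def by blast
    then show ?thesis using keys_mult[of a b] unfolding poly_ring_def by blast
  qed
  have add: "a + b \<in> poly_ring V" if "a \<in> poly_ring V" "b \<in> poly_ring V" for a b :: "('v, 'k) mpoly"
    using that keys_add[of a b] unfolding poly_ring_def by blast
  have "0 \<in> (poly_ring V :: ('v, 'k) mpoly set)" "1 \<in> (poly_ring V :: ('v, 'k) mpoly set)"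
    "\<forall>a\<in>(poly_ring V :: ('v, 'k) mpoly set). - a \<in> poly_ring V"
    by (auto simp: poly_ring_def)
  then show ?thesis unfolding is_subring_def using add mult by blast
qed

lemma monom_in_poly_ring:
  "Poly_Mapping.keys m \<subseteq> V \<Longrightarrow> (monom m :: ('v, 'k::comm_ring_1) mpoly) \<in> poly_ring V"
  by (simp add: poly_ring_def monom_def)

lemma const_in_poly_ring: "(Poly_Mapping.single 0 c :: ('v, 'k::zero) mpoly) \<in> poly_ring V"
  by (simp add: poly_ring_def)

text \<open>Subtracting from p its pushforward along a choice of representatives of the fibres of f, which
  vanishes, leaves a combination of binomials m - m' with f m = f m'.\<close>

lemma pushforward_eq_0_imp_mem_ideal:
  fixes p :: "('v, 'k::comm_ring_1) mpoly"
  assumes I: "is_ideal_in (poly_ring V) I" and p: "pushforward f p = 0"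
    and binomials: "\<And>m m'. m \<in> Poly_Mapping.keys p \<Longrightarrow> m' \<in> Poly_Mapping.keys p \<Longrightarrow> f m = f m' \<Longrightarrow>
      monom m - monom m' \<in> I"
  shows "p \<in> I"
proof -
  define rep where "rep u = (SOME m. m \<in> Poly_Mapping.keys p \<and> f m = u)" for u
  have rep: "rep (f m) \<in> Poly_Mapping.keys p \<and> f (rep (f m)) = f m" if "m \<in> Poly_Mapping.keys p" for m
    unfolding rep_def by (rule someI[of _ m]) (use that in auto)
  have "pushforward (rep \<circ> f) p = 0" using p by (simp flip: pushforward_comp)
  moreover have "p - pushforward (rep \<circ> f) p = (\<Sum>m\<in>Poly_Mapping.keys p.
      Poly_Mapping.single 0 (Poly_Mapping.lookup p m) * (monom m - monom (rep (f m))))"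
    by (subst (1) poly_mapping_sum_single[of p, symmetric])
       (simp add: pushforward_def sum_subtractf algebra_simps monom_def mult_single)
  moreover have "\<dots> \<in> I"
    using binomials rep by (intro ideal_sum[OF I] ideal_mult[OF I] const_in_poly_ring) auto
  ultimately show ?thesis by simp
qed

lemma singleton_notin_edges: "simple_graph_on d E \<Longrightarrow> {i} \<notin> E"
  unfolding simple_graph_on_def by (metis doubleton_eq_iff insert_absorb2)

lemma stable_set_subset: "S \<in> stable_sets d E \<Longrightarrow> T \<subseteq> S \<Longrightarrow> T \<in> stable_sets d E"
  unfolding stable_sets_def by blast

lemma stable_set_finite: "S \<in> stable_sets d E \<Longrightarrow> finite S"
  unfolding stable_sets_def using finite_subset by blast

lemma stable_set_iff:
  assumes "simple_graph_on d E"
  shows "S \<in> stable_sets d E \<longleftrightarrow> S \<subseteq> {1..d} \<and> (\<forall>i\<in>S. \<forall>j\<in>S. {i, j} \<notin> E)"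
proof
  assume "S \<subseteq> {1..d} \<and> (\<forall>i\<in>S. \<forall>j\<in>S. {i, j} \<notin> E)"
  moreover have "\<not> e \<subseteq> S" if "e \<in> E" "\<forall>i\<in>S. \<forall>j\<in>S. {i, j} \<notin> E" for e
    using assms that unfolding simple_graph_on_def by fastforce
  ultimately show "S \<in> stable_sets d E" by (simp add: stable_sets_def)
qed (auto simp: stable_sets_def)

lemma empty_stable_set: "simple_graph_on d E \<Longrightarrow> {} \<in> stable_sets d E"
  by (simp add: stable_set_iff)

lemma singleton_stable_set: "simple_graph_on d E \<Longrightarrow> j \<in> {1..d} \<Longrightarrow> {j} \<in> stable_sets d E"
  by (simp add: stable_set_iff singleton_notin_edges)

lemma doubleton_stable_set:
  assumes "simple_graph_on d E" "i \<in> {1..d}" "j \<in> {1..d}" "{i, j} \<notin> E"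
  shows "{i, j} \<in> stable_sets d E"
  using assms by (auto simp: stable_set_iff singleton_notin_edges insert_commute)

lemma complement_has_triangle_iff:
  assumes G: "simple_graph_on d E"
  shows "complement_has_triangle d E \<longleftrightarrow> (\<exists>S\<in>stable_sets d E. 3 \<le> card S)"
proof
  assume "complement_has_triangle d E"
  then obtain a b c where "a \<in> {1..d}" "b \<in> {1..d}" "c \<in> {1..d}" "a \<noteq> b" "b \<noteq> c" "a \<noteq> c"
    "{a, b} \<notin> E" "{b, c} \<notin> E" "{a, c} \<notin> E"
    unfolding complement_has_triangle_def by blast
  then have "{a, b, c} \<in> stable_sets d E" "card {a, b, c} = 3"
    by (auto simp: stable_set_iff[OF G] singleton_notin_edges[OF G] insert_commute)
  then show "\<exists>S\<in>stable_sets d E. 3 \<le> card S" by force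
next
  assume "\<exists>S\<in>stable_sets d E. 3 \<le> card S"
  then obtain S a b c where S: "S \<in> stable_sets d E" and abc: "{a, b, c} \<subseteq> S" "distinct [a, b, c]"
    by (auto simp: card_le_Suc_iff numeral_eq_Suc)
  then have "{a, b, c} \<subseteq> {1..d}" "{a, b} \<notin> E" "{b, c} \<notin> E" "{a, c} \<notin> E"
    unfolding stable_set_iff[OF G] by blast+
  with abc(2) show "complement_has_triangle d E"
    unfolding complement_has_triangle_def by auto
qed

lemma same_part_iff_nonadjacent:
  assumes G: "simple_graph_on d E" and mp: "complete_multipartite_wrt d E P"
    and "i \<in> {1..d}" "j \<in> {1..d}"
  shows "(\<exists>V\<in>P. i \<in> V \<and> j \<in> V) \<longleftrightarrow> {i, j} \<notin> E"
proof (cases "i = j")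
  case True
  have "\<Union>P = {1..d}" using mp by (simp add: complete_multipartite_wrt_def partition_on_def)
  then show ?thesis using True assms(3) singleton_notin_edges[OF G] by auto
qed (use assms in \<open>simp add: complete_multipartite_wrt_def\<close>)

lemma complete_multipartite_transp:
  assumes G: "simple_graph_on d E" and mp: "complete_multipartite_wrt d E P"
  shows "transp_on {1..d} (\<lambda>i j. {i, j} \<notin> E)"
proof (rule transp_onI)
  let ?same = "{(x, y). \<exists>V\<in>P. x \<in> V \<and> y \<in> V}"
  have "trans ?same"
    using mp equiv_partition_on by (auto simp: complete_multipartite_wrt_def elim: equivE)
  fix i j l assume "i \<in> {1..d}" "j \<in> {1..d}" "l \<in> {1..d}" "{i, j} \<notin> E" "{j, l} \<notin> E"
  then show "{i, l} \<notin> E"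
    using same_part_iff_nonadjacent[OF G mp] transD[OF \<open>trans ?same\<close>, of i j l] by simp
qed

lemma stable_set_subset_part:
  assumes G: "simple_graph_on d E" and mp: "complete_multipartite_wrt d E P"
    and S: "S \<in> stable_sets d E" "x \<in> S"
  obtains V where "V \<in> P" "S \<subseteq> V"
proof -
  have part: "partition_on {1..d} P" using mp by (simp add: complete_multipartite_wrt_def)
  have x: "x \<in> {1..d}" using S by (auto simp: stable_sets_def)
  then obtain V where V: "V \<in> P" "x \<in> V" using partition_onD1[OF part] by blast
  have "y \<in> V" if "y \<in> S" for y
  proof -
    have "{x, y} \<notin> E" "y \<in> {1..d}" using S that unfolding stable_set_iff[OF G] by blast+
    then obtain V' where "V' \<in> P" "x \<in> V'" "y \<in> V'"
      using same_part_iff_nonadjacent[OF G mp x] by blast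
    then show "y \<in> V" using V partition_onD2[OF part] by (auto simp: disjoint_def)
  qed
  then show ?thesis using V(1) that by blast
qed

definition nonadjacency :: "nat \<Rightarrow> nat set set \<Rightarrow> (nat \<times> nat) set" where
  "nonadjacency d E = {(i, j). i \<in> {1..d} \<and> j \<in> {1..d} \<and> {i, j} \<notin> E}"

lemma equiv_nonadjacency:
  assumes G: "simple_graph_on d E" and trans: "transp_on {1..d} (\<lambda>i j. {i, j} \<notin> E)"
  shows "equiv {1..d} (nonadjacency d E)"
proof (rule equivI)
  show "nonadjacency d E \<subseteq> {1..d} \<times> {1..d}" by (auto simp: nonadjacency_def)
  show "refl_on {1..d} (nonadjacency d E)"
    by (rule refl_onI) (simp add: nonadjacency_def singleton_notin_edges[OF G])
  show "sym (nonadjacency d E)" by (rule symI) (simp add: nonadjacency_def insert_commute)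
  show "trans (nonadjacency d E)"
    by (rule transI) (use trans in \<open>unfold nonadjacency_def transp_on_def, blast\<close>)
qed

lemma nonadjacency_class_related:
  assumes "equiv {1..d} (nonadjacency d E)" "V \<in> {1..d} // nonadjacency d E" "i \<in> V" "j \<in> V"
  shows "(i, j) \<in> nonadjacency d E"
proof -
  obtain x where "V = nonadjacency d E `` {x}" using assms(2) by (rule quotientE)
  then have "(x, i) \<in> nonadjacency d E" "(x, j) \<in> nonadjacency d E" using assms(3,4) by auto
  then show ?thesis using assms(1) by (meson equivE symD transD)
qed

lemma complete_multipartite_nonadjacency_classes:
  assumes G: "simple_graph_on d E" and trans: "transp_on {1..d} (\<lambda>i j. {i, j} \<notin> E)"
  shows "complete_multipartite_wrt d E ({1..d} // nonadjacency d E)"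
  unfolding complete_multipartite_wrt_def
proof (intro conjI ballI impI partition_on_quotient equiv_nonadjacency[OF G trans])
  note equiv = equiv_nonadjacency[OF G trans]
  fix i j assume ij: "i \<in> {1..d}" "j \<in> {1..d}" "i \<noteq> j"
  have "nonadjacency d E `` {i} \<in> {1..d} // nonadjacency d E" using ij(1) by (rule quotientI)
  moreover have "i \<in> nonadjacency d E `` {i}" using equiv ij(1) by (rule equiv_class_self)
  ultimately have "(\<exists>V\<in>{1..d} // nonadjacency d E. i \<in> V \<and> j \<in> V) \<longleftrightarrow> (i, j) \<in> nonadjacency d E"
    using nonadjacency_class_related[OF equiv] by blast
  then show "{i, j} \<in> E \<longleftrightarrow> \<not> (\<exists>V\<in>{1..d} // nonadjacency d E. i \<in> V \<and> j \<in> V)"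
    using ij by (simp add: nonadjacency_def)
qed

lemma nonadjacency_class_stable:
  assumes G: "simple_graph_on d E" and trans: "transp_on {1..d} (\<lambda>i j. {i, j} \<notin> E)"
    and V: "V \<in> {1..d} // nonadjacency d E"
  shows "V \<in> stable_sets d E"
  using nonadjacency_class_related[OF equiv_nonadjacency[OF G trans] V]
    in_quotient_imp_subset[OF equiv_nonadjacency[OF G trans] V]
  unfolding stable_set_iff[OF G] by (simp add: nonadjacency_def)

lemma ex_complete_multipartite_iff:
  assumes G: "simple_graph_on d E"
  shows "(\<exists>P. complete_multipartite_wrt d E P \<and> (\<forall>V\<in>P. card V \<le> k)) \<longleftrightarrow>
    transp_on {1..d} (\<lambda>i j. {i, j} \<notin> E) \<and> (\<forall>S\<in>stable_sets d E. card S \<le> k)"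
proof
  assume "\<exists>P. complete_multipartite_wrt d E P \<and> (\<forall>V\<in>P. card V \<le> k)"
  then obtain P where mp: "complete_multipartite_wrt d E P" and small: "\<forall>V\<in>P. card V \<le> k"
    by blast
  have "card S \<le> k" if S: "S \<in> stable_sets d E" for S
  proof (cases "S = {}")
    case False
    then obtain V where V: "V \<in> P" "S \<subseteq> V" using stable_set_subset_part[OF G mp S] by blast
    moreover have "finite V"
      using V(1) mp by (metis complete_multipartite_wrt_def partition_onD1 Union_upper
          finite_atLeastAtMost finite_subset)
    ultimately show ?thesis using small by (meson card_mono order.trans)
  qed simp
  then show "transp_on {1..d} (\<lambda>i j. {i, j} \<notin> E) \<and> (\<forall>S\<in>stable_sets d E. card S \<le> k)"
    using complete_multipartite_transp[OF G mp] by blast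
next
  assume "transp_on {1..d} (\<lambda>i j. {i, j} \<notin> E) \<and> (\<forall>S\<in>stable_sets d E. card S \<le> k)"
  then show "\<exists>P. complete_multipartite_wrt d E P \<and> (\<forall>V\<in>P. card V \<le> k)"
    using complete_multipartite_nonadjacency_classes[OF G] nonadjacency_class_stable[OF G] by blast
qed

lemma mono_img_add: "mono_img (a + b) = mono_img a + mono_img b"
  unfolding mono_img_def
  by (rule setsum_keys_plus_distrib) (simp_all add: single_add sum.distrib ac_simps)

lemma mono_img_zero [simp]: "mono_img 0 = 0"
  by (simp add: mono_img_def)

lemma mono_img_single:
  "mono_img (Poly_Mapping.single S k) =
    Poly_Mapping.single None k + (\<Sum>j\<in>S. Poly_Mapping.single (Some j) k)"
  unfolding mono_img_def by (cases "k = 0") simp_all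

lemma lookup_mono_img_var:
  assumes "finite S"
  shows "Poly_Mapping.lookup (mono_img (Poly_Mapping.single S 1)) None = 1"
    and "Poly_Mapping.lookup (mono_img (Poly_Mapping.single S 1)) (Some j) = count (mset_set S) j"
  using assms by (simp_all add: mono_img_single lookup_add lookup_sum lookup_single when_def count_mset_set')

lemma mono_img_pair_eq_iff:
  assumes "finite S1" "finite S2" "finite S3" "finite S4"
  shows "mono_img (Poly_Mapping.single S1 1 + Poly_Mapping.single S2 1) =
      mono_img (Poly_Mapping.single S3 1 + Poly_Mapping.single S4 1) \<longleftrightarrow>
    mset_set S1 + mset_set S2 = mset_set S3 + mset_set S4"
proof -
  have lookup_pair: "Poly_Mapping.lookup (mono_img (Poly_Mapping.single A 1 + Poly_Mapping.single B 1)) v =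
      (case v of None \<Rightarrow> 2 | Some j \<Rightarrow> count (mset_set A + mset_set B) j)"
    if "finite A" "finite B" for A B v
    using that by (cases v) (simp_all add: mono_img_add lookup_add lookup_mono_img_var del: One_nat_def)
  show ?thesis
  proof
    assume "mono_img (Poly_Mapping.single S1 1 + Poly_Mapping.single S2 1) =
      mono_img (Poly_Mapping.single S3 1 + Poly_Mapping.single S4 1)"
    then have "Poly_Mapping.lookup (mono_img (Poly_Mapping.single S1 1 + Poly_Mapping.single S2 1)) (Some j) =
      Poly_Mapping.lookup (mono_img (Poly_Mapping.single S3 1 + Poly_Mapping.single S4 1)) (Some j)" for j
      by simp
    then show "mset_set S1 + mset_set S2 = mset_set S3 + mset_set S4"
      unfolding multiset_eq_iff lookup_pair[OF assms(1,2)] lookup_pair[OF assms(3,4)] by simp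
  qed (intro poly_mapping_eqI, simp add: lookup_pair assms split: option.split del: One_nat_def)
qed

lemma piG_eq_pushforward: "piG = pushforward mono_img"
  by (simp add: fun_eq_iff piG_def pushforward_def)

lemma piG_add: "piG (p + q) = piG p + piG q"
  by (simp add: piG_eq_pushforward pushforward_add)

lemma piG_mult: "piG (p * q) = piG p * piG q"
  by (simp add: piG_eq_pushforward pushforward_mult mono_img_add)

lemma piG_monom: "piG (monom m) = monom (mono_img m)"
  by (simp add: piG_eq_pushforward monom_def)

lemma RG_subring: "is_subring (RG d E :: (nat set, 'k::comm_ring_1) mpoly set)"
  unfolding RG_def by (rule poly_ring_subring)

lemma monom_in_RG:
  "Poly_Mapping.keys m \<subseteq> stable_sets d E \<Longrightarrow> (monom m :: (nat set, 'k::comm_ring_1) mpoly) \<in> RG d E"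
  unfolding RG_def by (rule monom_in_poly_ring)

lemma var_in_RG: "S \<in> stable_sets d E \<Longrightarrow> (var S :: (nat set, 'k::comm_ring_1) mpoly) \<in> RG d E"
  unfolding var_eq_monom by (rule monom_in_RG) simp

lemma homogeneous_monom_diff:
  assumes "monom_deg M1 = n" "monom_deg M2 = n"
  shows "homogeneous_of_deg n (monom M1 - monom M2 :: ('v, 'k::comm_ring_1) mpoly)"
proof -
  have "Poly_Mapping.keys (monom M1 - monom M2 :: ('v, 'k) mpoly) \<subseteq> {M1, M2}"
    using keys_diff[of "monom M1 :: ('v, 'k) mpoly" "monom M2"] by (auto simp: monom_def)
  then show ?thesis using assms unfolding homogeneous_of_deg_def by blast
qed

lemma homogeneous_quadratic_binomial:
  "homogeneous_of_deg 2 (var S1 * var S2 - var S3 * var S4 :: ('v, 'k::comm_ring_1) mpoly)"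
  unfolding var_mult_var by (rule homogeneous_monom_diff) (simp_all add: monom_deg_add)

lemma IG_ideal: "is_ideal_in (RG d E) (IG d E :: (nat set, 'k::comm_ring_1) mpoly set)"
  using RG_subring[of d E, where 'k = 'k] piG_def[of 0]
  by (auto simp: is_ideal_in_def IG_def is_subring_def piG_add piG_mult)

lemma IG_subset_RG: "IG d E \<subseteq> RG d E"
  by (auto simp: IG_def)

lemma binomial_in_IG:
  assumes "Poly_Mapping.keys m \<subseteq> stable_sets d E" "Poly_Mapping.keys m' \<subseteq> stable_sets d E"
    and "mono_img m = mono_img m'"
  shows "(monom m - monom m' :: (nat set, 'k::comm_ring_1) mpoly) \<in> IG d E"
  using assms
  by (simp add: IG_def piG_eq_pushforward pushforward_diff monom_def subring_diff[OF RG_subring]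
      monom_in_RG[unfolded monom_def])

lemma quadratic_binomial_in_IG:
  assumes "S1 \<in> stable_sets d E" "S2 \<in> stable_sets d E" "S3 \<in> stable_sets d E" "S4 \<in> stable_sets d E"
    and "mset_set S1 + mset_set S2 = mset_set S3 + mset_set S4"
  shows "(var S1 * var S2 - var S3 * var S4 :: (nat set, 'k::comm_ring_1) mpoly) \<in> IG d E"
  unfolding var_mult_var
proof (rule binomial_in_IG)
  show "Poly_Mapping.keys (Poly_Mapping.single S1 1 + Poly_Mapping.single S2 (1::nat)) \<subseteq> stable_sets d E"
    "Poly_Mapping.keys (Poly_Mapping.single S3 1 + Poly_Mapping.single S4 (1::nat)) \<subseteq> stable_sets d E"
    using assms unfolding keys_single_1_add_single_1 by simp_all
  show "mono_img (Poly_Mapping.single S1 1 + Poly_Mapping.single S2 (1::nat)) =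
      mono_img (Poly_Mapping.single S3 1 + Poly_Mapping.single S4 1)"
    using assms by (subst mono_img_pair_eq_iff) (simp_all add: stable_set_finite)
qed

definition J_binomials :: "nat \<Rightarrow> nat set set \<Rightarrow> (nat set, 'k::comm_ring_1) mpoly set" where
  "J_binomials d E = {var S1 * var S2 - var S3 * var S4 | S1 S2 S3 S4.
     S1 \<in> stable_sets d E \<and> S2 \<in> stable_sets d E \<and> S3 \<in> stable_sets d E \<and> S4 \<in> stable_sets d E \<and>
     S1 \<inter> S2 = {} \<and> S3 \<inter> S4 = {} \<and> S1 \<union> S2 = S3 \<union> S4}"

definition L_binomials :: "nat \<Rightarrow> nat set set \<Rightarrow> (nat set, 'k::comm_ring_1) mpoly set" where
  "L_binomials d E = {var (S - {i}) * var {i} - var S * var {} | i S.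
     S \<in> stable_sets d E \<and> i \<in> S \<and> card S \<ge> 2}"

lemma JG_eq_ideal_gen: "JG d E = ideal_gen (RG d E) (J_binomials d E)"
  unfolding JG_def J_binomials_def ..

lemma LG_eq_ideal_gen: "LG d E = ideal_gen (RG d E) (L_binomials d E)"
  unfolding LG_def L_binomials_def ..

lemma J_binomials_subset_IG: "J_binomials d E \<subseteq> (IG d E :: (nat set, 'k::comm_ring_1) mpoly set)"
proof
  fix g :: "(nat set, 'k) mpoly" assume "g \<in> J_binomials d E"
  then obtain S1 S2 S3 S4 where g: "g = var S1 * var S2 - var S3 * var S4"
    and S: "S1 \<in> stable_sets d E" "S2 \<in> stable_sets d E" "S3 \<in> stable_sets d E" "S4 \<in> stable_sets d E"
    and disj: "S1 \<inter> S2 = {}" "S3 \<inter> S4 = {}" and union: "S1 \<union> S2 = S3 \<union> S4"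
    unfolding J_binomials_def by blast
  have "mset_set S1 + mset_set S2 = mset_set S3 + mset_set S4"
    using S disj union by (metis mset_set_Union stable_set_finite)
  then show "g \<in> IG d E" unfolding g using S by (rule quadratic_binomial_in_IG[rotated 4])
qed

lemma L_binomials_subset_J_binomials: "L_binomials d E \<subseteq> J_binomials d E"
proof
  fix g assume "g \<in> L_binomials d E"
  then obtain i S where g: "g = var (S - {i}) * var {i} - var S * var {}"
    and S: "S \<in> stable_sets d E" "i \<in> S"
    unfolding L_binomials_def by blast
  have "S - {i} \<in> stable_sets d E" "{i} \<in> stable_sets d E" "{} \<in> stable_sets d E"
    using S stable_set_subset by blast+
  then show "g \<in> J_binomials d E"
    unfolding J_binomials_def g using S by blast
qed

lemma JG_ideal: "is_ideal_in (RG d E) (JG d E :: (nat set, 'k::comm_ring_1) mpoly set)"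
  unfolding JG_eq_ideal_gen
  by (rule is_ideal_in_ideal_gen[OF RG_subring order.trans[OF J_binomials_subset_IG IG_subset_RG]])

lemma LG_ideal: "is_ideal_in (RG d E) (LG d E :: (nat set, 'k::comm_ring_1) mpoly set)"
  unfolding LG_eq_ideal_gen
  by (rule is_ideal_in_ideal_gen[OF RG_subring order.trans[OF L_binomials_subset_J_binomials
        order.trans[OF J_binomials_subset_IG IG_subset_RG]]])

lemma J_binomial_in_JG:
  assumes "S1 \<in> stable_sets d E" "S2 \<in> stable_sets d E" "S3 \<in> stable_sets d E" "S4 \<in> stable_sets d E"
    "S1 \<inter> S2 = {}" "S3 \<inter> S4 = {}" "S1 \<union> S2 = S3 \<union> S4"
  shows "(var S1 * var S2 - var S3 * var S4 :: (nat set, 'k::comm_ring_1) mpoly) \<in> JG d E"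
  unfolding JG_eq_ideal_gen
  by (rule ideal_gen_base[OF RG_subring]) (use assms in \<open>auto simp: J_binomials_def\<close>)

lemma L_binomial_in_LG:
  assumes S: "S \<in> stable_sets d E" and i: "i \<in> S"
  shows "(var (S - {i}) * var {i} - var S * var {} :: (nat set, 'k::comm_ring_1) mpoly) \<in> LG d E"
proof (cases "card S \<ge> 2")
  case True
  then show ?thesis unfolding LG_eq_ideal_gen
    by (intro ideal_gen_base[OF RG_subring]) (use S i in \<open>auto simp: L_binomials_def\<close>)
next
  case False
  moreover have "card S \<noteq> 0" using i stable_set_finite[OF S] by auto
  ultimately have "card S = 1" by linarith
  then have "S = {i}" using i by (auto simp: card_1_singleton_iff)
  then show ?thesis using LG_ideal[of d E, where 'k = 'k] by (simp add: is_ideal_in_def)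
qed

lemma LG_subset_JG: "LG d E \<subseteq> JG d E"
  unfolding LG_eq_ideal_gen JG_eq_ideal_gen by (rule ideal_gen_mono[OF L_binomials_subset_J_binomials])

lemma JG_subset_IG2: "JG d E \<subseteq> (IG2 d E :: (nat set, 'k::comm_ring_1) mpoly set)"
  unfolding JG_eq_ideal_gen IG2_def
proof (rule ideal_gen_mono, rule subsetI)
  fix g :: "(nat set, 'k) mpoly" assume g: "g \<in> J_binomials d E"
  then obtain S1 S2 S3 S4 where "g = var S1 * var S2 - var S3 * var S4"
    unfolding J_binomials_def by blast
  then have "homogeneous_of_deg 2 g" by (simp add: homogeneous_quadratic_binomial)
  with g show "g \<in> {p \<in> IG d E. homogeneous_of_deg 2 p}" using J_binomials_subset_IG by blast
qed

lemma IG2_subset_IG: "IG2 d E \<subseteq> (IG d E :: (nat set, 'k::comm_ring_1) mpoly set)"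
  unfolding IG2_def by (rule ideal_gen_least[OF IG_ideal]) blast

section \<open>Normal forms modulo L_G and primality\<close>

text \<open>Pushing monomials of K[t, s] forward along s \<mapsto> x_\<emptyset>, t_j \<mapsto> x_{j} yields the normal forms
  modulo L_G.\<close>

definition lift_var :: "nat option \<Rightarrow> nat set" where
  "lift_var v = (case v of None \<Rightarrow> {} | Some j \<Rightarrow> {j})"

definition t_degree :: "(nat option \<Rightarrow>\<^sub>0 nat) \<Rightarrow> nat" where
  "t_degree u = (\<Sum>v\<in>Poly_Mapping.keys u. if v = None then 0 else Poly_Mapping.lookup u v)"

lemma t_degree_add: "t_degree (a + b) = t_degree a + t_degree b"
  unfolding t_degree_def by (rule setsum_keys_plus_distrib) auto

lemma t_degree_single: "t_degree (Poly_Mapping.single v k) = (if v = None then 0 else k)"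
  unfolding t_degree_def by (cases "k = 0") auto

lemma t_degree_mono_img_var: "finite S \<Longrightarrow> t_degree (mono_img (Poly_Mapping.single S 1)) = card S"
proof (induction S rule: finite_induct)
  case (insert i S)
  then show ?case
    by (simp add: mono_img_single t_degree_add t_degree_single del: One_nat_def)
qed (simp add: mono_img_single t_degree_single)

lemma monom_lift_mono_img_var:
  assumes "finite S"
  shows "(monom (pushforward lift_var (mono_img (Poly_Mapping.single S 1))) :: (nat set, 'k::comm_ring_1) mpoly)
    = var {} * (\<Prod>j\<in>S. var {j})"
  by (simp add: mono_img_single pushforward_add pushforward_sum lift_var_def monom_add monom_sum
      var_eq_monom del: One_nat_def)

lemma var_empty_power_mult_var_cong:
  assumes "S \<in> stable_sets d E"
  shows "(var {} ^ card S * var S - var {} * (\<Prod>j\<in>S. var {j}) :: (nat set, 'k::comm_ring_1) mpoly)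
    \<in> LG d E"
  using stable_set_finite[OF assms] assms
proof (induction S rule: finite_induct)
  case empty
  then show ?case using LG_ideal[of d E, where 'k = 'k] by (simp add: is_ideal_in_def)
next
  case (insert i S)
  let ?x = "var {} :: (nat set, 'k) mpoly"
  have S: "S \<in> stable_sets d E" using insert.prems stable_set_subset by blast
  have "insert i S - {i} = S" "card (insert i S) = Suc (card S)"
    "(\<Prod>j\<in>insert i S. var {j}) = var {i} * (\<Prod>j\<in>S. var {j} :: (nat set, 'k) mpoly)"
    using insert.hyps by auto
  then have "?x ^ card (insert i S) * var (insert i S) - ?x * (\<Prod>j\<in>insert i S. var {j}) =
      var {i} * (?x ^ card S * var S - ?x * (\<Prod>j\<in>S. var {j}))
      - ?x ^ card S * (var (insert i S - {i}) * var {i} - var (insert i S) * ?x)"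
    by (simp add: algebra_simps)
  also have "\<dots> \<in> LG d E"
  proof (rule ideal_diff[OF RG_subring LG_ideal]; rule ideal_mult[OF LG_ideal])
    have "{i} \<in> stable_sets d E" "{} \<in> stable_sets d E"
      by (rule stable_set_subset[OF insert.prems], simp)+
    then show "(var {i} :: (nat set, 'k) mpoly) \<in> RG d E" "?x ^ card S \<in> RG d E"
      by (simp_all add: var_in_RG subring_power[OF RG_subring])
    show "?x ^ card S * var S - ?x * (\<Prod>j\<in>S. var {j}) \<in> LG d E" by (rule insert.IH[OF S])
    show "var (insert i S - {i}) * var {i} - var (insert i S) * ?x \<in> LG d E"
      by (rule L_binomial_in_LG[OF insert.prems]) simp
  qed
  finally show ?case .
qed

lemma var_empty_power_mult_monom_cong:
  assumes "Poly_Mapping.keys m \<subseteq> stable_sets d E"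
  shows "(var {} ^ t_degree (mono_img m) * monom m - monom (pushforward lift_var (mono_img m))
    :: (nat set, 'k::comm_ring_1) mpoly) \<in> LG d E"
  using assms
proof (induction m rule: monomial_induct)
  case zero
  then show ?case using LG_ideal[of d E, where 'k = 'k] by (simp add: is_ideal_in_def t_degree_def mono_img_def)
next
  case (add_var S m)
  let ?x = "var {} :: (nat set, 'k) mpoly"
  have S: "finite S" "{} \<in> stable_sets d E" "\<And>j. j \<in> S \<Longrightarrow> {j} \<in> stable_sets d E"
    using add_var(1) stable_set_finite stable_set_subset by blast+
  have "?x ^ t_degree (mono_img (Poly_Mapping.single S 1 + m)) * monom (Poly_Mapping.single S 1 + m)
      - monom (pushforward lift_var (mono_img (Poly_Mapping.single S 1 + m)))
    = (?x ^ card S * var S) * (?x ^ t_degree (mono_img m) * monom m)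
      - (?x * (\<Prod>j\<in>S. var {j})) * monom (pushforward lift_var (mono_img m))"
    using monom_lift_mono_img_var[OF S(1), where 'k = 'k] t_degree_mono_img_var[OF S(1)]
    by (simp add: mono_img_add t_degree_add pushforward_add monom_add power_add var_eq_monom
        algebra_simps del: One_nat_def)
  also have "\<dots> \<in> LG d E"
  proof (rule ideal_mult_congruence[OF LG_ideal var_empty_power_mult_var_cong[OF add_var(1)] add_var(3)])
    show "?x ^ t_degree (mono_img m) * monom m \<in> RG d E"
      using add_var(2) S(2) by (intro subring_mult[OF RG_subring] subring_power[OF RG_subring]
          var_in_RG monom_in_RG)
    show "?x * (\<Prod>j\<in>S. var {j}) \<in> RG d E"
      using S(2,3) by (intro subring_mult[OF RG_subring] subring_prod[OF RG_subring] var_in_RG)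
  qed
  finally show ?case .
qed

lemma IG_subset_saturation_LG:
  assumes G: "simple_graph_on d E"
  shows "IG d E \<subseteq> saturation (RG d E) (LG d E) (var {} :: (nat set, 'k::comm_ring_1) mpoly)"
proof
  let ?x = "var {} :: (nat set, 'k) mpoly"
  fix f :: "(nat set, 'k) mpoly" assume f: "f \<in> IG d E"
  show "f \<in> saturation (RG d E) (LG d E) ?x"
  proof (rule pushforward_eq_0_imp_mem_ideal)
    show "is_ideal_in (poly_ring (stable_sets d E)) (saturation (RG d E) (LG d E) ?x)"
      using is_ideal_in_saturation[OF RG_subring LG_ideal var_in_RG[OF empty_stable_set[OF G]]]
      unfolding RG_def .
    show "pushforward mono_img f = 0" using f by (simp add: IG_def piG_eq_pushforward)
  next
    fix m m' assume m: "m \<in> Poly_Mapping.keys f" "m' \<in> Poly_Mapping.keys f"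
      and img: "mono_img m = mono_img m'"
    have keys: "Poly_Mapping.keys m \<subseteq> stable_sets d E" "Poly_Mapping.keys m' \<subseteq> stable_sets d E"
      using f m by (auto simp: IG_def RG_def poly_ring_def)
    let ?t = "t_degree (mono_img m)"
    have "?x ^ ?t * (monom m - monom m') =
        (?x ^ ?t * monom m - monom (pushforward lift_var (mono_img m)))
        - (?x ^ t_degree (mono_img m') * monom m' - monom (pushforward lift_var (mono_img m')))"
      using img by (simp add: algebra_simps)
    also have "\<dots> \<in> LG d E"
      using var_empty_power_mult_monom_cong[OF keys(1)] var_empty_power_mult_monom_cong[OF keys(2)]
      by (rule ideal_diff[OF RG_subring LG_ideal])
    finally show "monom m - monom m' \<in> saturation (RG d E) (LG d E) ?x"
      using keys unfolding saturation_def
      by (blast intro: subring_diff[OF RG_subring] monom_in_RG)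
  qed
qed

lemma var_empty_notin_IG: "(var {} :: (nat set, 'k::comm_ring_1) mpoly) \<notin> IG d E"
proof -
  have "piG (var {} :: (nat set, 'k) mpoly) = monom (Poly_Mapping.single None 1)"
    by (simp add: var_eq_monom piG_monom mono_img_single del: One_nat_def)
  moreover have "monom (Poly_Mapping.single None 1) \<noteq> (0 :: (nat option, 'k) mpoly)"
    unfolding monom_def by (metis lookup_single_eq lookup_zero one_neq_zero)
  ultimately show ?thesis by (simp add: IG_def)
qed

(* The linear order on nat option from Option_ord provides the idom instance of K[t, s]. *)
lemma IG_prime: "prime_ideal_in (RG d E) (IG d E :: (nat set, 'k::idom) mpoly set)"
  unfolding prime_ideal_in_def
proof (intro conjI ballI impI)
  show "is_ideal_in (RG d E) (IG d E :: (nat set, 'k) mpoly set)" by (rule IG_ideal)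
  have "piG (1 :: (nat set, 'k) mpoly) = 1" by (metis monom_zero mono_img_zero piG_monom)
  then have "(1 :: (nat set, 'k) mpoly) \<in> RG d E" "(1 :: (nat set, 'k) mpoly) \<notin> IG d E"
    using monom_in_RG[of 0 d E, where 'k = 'k] by (simp_all add: IG_def)
  then show "IG d E \<noteq> (RG d E :: (nat set, 'k) mpoly set)" by blast
next
  fix a b :: "(nat set, 'k) mpoly"
  assume "a \<in> RG d E" "b \<in> RG d E" "a * b \<in> IG d E"
  then show "a \<in> IG d E \<or> b \<in> IG d E" by (simp add: IG_def piG_mult)
qed

lemma prime_ideal_between_LG_IG_iff:
  assumes G: "simple_graph_on d E" and "LG d E \<subseteq> P" "P \<subseteq> (IG d E :: (nat set, 'k::idom) mpoly set)"
  shows "prime_ideal_in (RG d E) P \<longleftrightarrow> P = IG d E"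
proof
  assume P: "prime_ideal_in (RG d E) P"
  have "IG d E \<subseteq> saturation (RG d E) (LG d E) (var {} :: (nat set, 'k) mpoly)"
    by (rule IG_subset_saturation_LG[OF G])
  also have "\<dots> \<subseteq> P"
    using var_empty_notin_IG assms(3) var_in_RG[OF empty_stable_set[OF G]]
    by (intro saturation_subset_prime_ideal[OF RG_subring P assms(2)]) auto
  finally show "P = IG d E" using assms(3) by blast
qed (simp add: IG_prime)

section \<open>Quadratic generators of I_G\<close>

lemma IG2_subset_ideal:
  fixes I :: "(nat set, 'k::comm_ring_1) mpoly set"
  assumes I: "is_ideal_in (RG d E) I"
    and binomials: "\<And>S1 S2 S3 S4. S1 \<in> stable_sets d E \<Longrightarrow> S2 \<in> stable_sets d E \<Longrightarrow>
      S3 \<in> stable_sets d E \<Longrightarrow> S4 \<in> stable_sets d E \<Longrightarrow>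
      mset_set S1 + mset_set S2 = mset_set S3 + mset_set S4 \<Longrightarrow> var S1 * var S2 - var S3 * var S4 \<in> I"
  shows "IG2 d E \<subseteq> I"
  unfolding IG2_def
proof (rule ideal_gen_least[OF I], rule subsetI)
  fix p :: "(nat set, 'k) mpoly" assume "p \<in> {p \<in> IG d E. homogeneous_of_deg 2 p}"
  then have p: "p \<in> IG d E" "homogeneous_of_deg 2 p" by simp_all
  have quadratic: "\<exists>S1 S2. m = Poly_Mapping.single S1 1 + Poly_Mapping.single S2 1 \<and>
      S1 \<in> stable_sets d E \<and> S2 \<in> stable_sets d E" if m: "m \<in> Poly_Mapping.keys p" for m
  proof -
    have "monom_deg m = 2" using p(2) m unfolding homogeneous_of_deg_def by blast
    then obtain S1 S2 where m_eq: "m = Poly_Mapping.single S1 1 + Poly_Mapping.single S2 1"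
      unfolding monom_deg_eq_2_iff by blast
    moreover have "Poly_Mapping.keys m \<subseteq> stable_sets d E"
      using p(1) m by (auto simp: IG_def RG_def poly_ring_def)
    moreover have "Poly_Mapping.keys m = {S1, S2}"
      unfolding m_eq by (rule keys_single_1_add_single_1)
    ultimately show ?thesis by blast
  qed
  show "p \<in> I"
  proof (rule pushforward_eq_0_imp_mem_ideal[OF I[unfolded RG_def]])
    show "pushforward mono_img p = 0" using p(1) by (simp add: IG_def piG_eq_pushforward)
  next
    fix m m' assume "m \<in> Poly_Mapping.keys p" "m' \<in> Poly_Mapping.keys p"
      and img: "mono_img m = mono_img m'"
    obtain S1 S2 S3 S4 where m: "m = Poly_Mapping.single S1 1 + Poly_Mapping.single S2 1"
      "m' = Poly_Mapping.single S3 1 + Poly_Mapping.single S4 1"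
      and S: "S1 \<in> stable_sets d E" "S2 \<in> stable_sets d E" "S3 \<in> stable_sets d E" "S4 \<in> stable_sets d E"
      using quadratic[OF \<open>m \<in> Poly_Mapping.keys p\<close>] quadratic[OF \<open>m' \<in> Poly_Mapping.keys p\<close>] by blast
    have "mset_set S1 + mset_set S2 = mset_set S3 + mset_set S4"
      using img unfolding m by (subst (asm) mono_img_pair_eq_iff) (use S stable_set_finite in auto)
    then show "monom m - monom m' \<in> I" using binomials[OF S] by (simp add: m var_mult_var)
  qed
qed

lemma IG2_subset_ideal_gen_quadratic_binomials:
  "IG2 d E \<subseteq> ideal_gen (RG d E) (quadratic_binomials d E \<inter> (IG d E :: (nat set, 'k::comm_ring_1) mpoly set))"
  (is "_ \<subseteq> ideal_gen (RG d E) ?B")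
proof (rule IG2_subset_ideal)
  show "is_ideal_in (RG d E) (ideal_gen (RG d E) ?B)"
    using IG_subset_RG by (intro is_ideal_in_ideal_gen[OF RG_subring]) blast
next
  fix S1 S2 S3 S4
  assume "S1 \<in> stable_sets d E" "S2 \<in> stable_sets d E" "S3 \<in> stable_sets d E" "S4 \<in> stable_sets d E"
    and "mset_set S1 + mset_set S2 = mset_set S3 + mset_set S4"
  moreover from this have
    "(var S1 * var S2 - var S3 * var S4 :: (nat set, 'k) mpoly) \<in> quadratic_binomials d E"
    unfolding quadratic_binomials_def by blast
  ultimately have "var S1 * var S2 - var S3 * var S4 \<in> ?B" by (simp add: quadratic_binomial_in_IG)
  then show "var S1 * var S2 - var S3 * var S4 \<in> ideal_gen (RG d E) ?B"
    by (rule ideal_gen_base[OF RG_subring])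
qed

lemma IG_eq_IG2_iff:
  "(IG d E :: (nat set, 'k::comm_ring_1) mpoly set) = IG2 d E \<longleftrightarrow>
    generated_by_quadratic_binomials d E (IG d E :: (nat set, 'k) mpoly set)"
proof
  assume eq: "(IG d E :: (nat set, 'k) mpoly set) = IG2 d E"
  let ?B = "quadratic_binomials d E \<inter> (IG d E :: (nat set, 'k) mpoly set)"
  have "ideal_gen (RG d E) ?B \<subseteq> IG d E" by (rule ideal_gen_least[OF IG_ideal]) simp
  then have "IG d E = ideal_gen (RG d E) ?B"
    using eq IG2_subset_ideal_gen_quadratic_binomials[of d E, where 'k = 'k] by blast
  then show "generated_by_quadratic_binomials d E (IG d E :: (nat set, 'k) mpoly set)"
    unfolding generated_by_quadratic_binomials_def by blast
next
  assume "generated_by_quadratic_binomials d E (IG d E :: (nat set, 'k) mpoly set)"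
  then obtain B where B: "B \<subseteq> quadratic_binomials d E"
    "(IG d E :: (nat set, 'k) mpoly set) = ideal_gen (RG d E) B"
    unfolding generated_by_quadratic_binomials_def by blast
  have "B \<subseteq> {p \<in> IG d E. homogeneous_of_deg 2 p}"
  proof
    fix b assume b: "b \<in> B"
    then have "b \<in> IG d E" unfolding B(2) by (rule ideal_gen_base[OF RG_subring])
    moreover obtain S1 S2 S3 S4 where "b = var S1 * var S2 - var S3 * var S4"
      using b B(1) unfolding quadratic_binomials_def by blast
    ultimately show "b \<in> {p \<in> IG d E. homogeneous_of_deg 2 p}"
      by (simp add: homogeneous_quadratic_binomial)
  qed
  then have "ideal_gen (RG d E) B \<subseteq> IG2 d E" unfolding IG2_def by (rule ideal_gen_mono)
  then have "(IG d E :: (nat set, 'k) mpoly set) \<subseteq> IG2 d E" using B(2) by simp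
  then show "(IG d E :: (nat set, 'k) mpoly set) = IG2 d E" using IG2_subset_IG by (rule subset_antisym)
qed

section \<open>The quadratic part of I_G versus J_G\<close>

lemma IG2_subset_JG:
  assumes small: "\<forall>S\<in>stable_sets d E. card S \<le> 2"
  shows "IG2 d E \<subseteq> (JG d E :: (nat set, 'k::comm_ring_1) mpoly set)"
proof (rule IG2_subset_ideal[OF JG_ideal])
  fix S1 S2 S3 S4
  assume S: "S1 \<in> stable_sets d E" "S2 \<in> stable_sets d E" "S3 \<in> stable_sets d E" "S4 \<in> stable_sets d E"
    and eq: "mset_set S1 + mset_set S2 = mset_set S3 + mset_set S4"
  note fin = stable_set_finite[OF S(1)] stable_set_finite[OF S(2)] stable_set_finite[OF S(3)]
    stable_set_finite[OF S(4)]
  show "(var S1 * var S2 - var S3 * var S4 :: (nat set, 'k) mpoly) \<in> JG d E"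
  proof (cases "S1 \<inter> S2 = {}")
    case True
    with S show ?thesis
      using mset_set_pair_eq_disjoint[OF fin True eq] by (intro J_binomial_in_JG) simp_all
  next
    case False
    then obtain a where "a \<in> S1" "a \<in> S2" by blast
    then have "(S1 = S3 \<and> S2 = S4) \<or> (S1 = S4 \<and> S2 = S3)"
      using small S by (intro mset_set_pair_eq_overlapping[OF fin _ _ _ _ _ _ eq]) simp_all
    then have "(var S1 * var S2 - var S3 * var S4 :: (nat set, 'k) mpoly) = 0"
      by (auto simp: mult.commute)
    then show ?thesis using JG_ideal[of d E, where 'k = 'k] by (simp add: is_ideal_in_def)
  qed
qed

lemma IG2_neq_JG:
  assumes S: "S \<in> stable_sets d E" "3 \<le> card S"
  shows "IG2 d E \<noteq> (JG d E :: (nat set, 'k::comm_ring_1) mpoly set)"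
proof -
  obtain a b c where abc: "{a, b, c} \<subseteq> S" "distinct [a, b, c]"
    using S(2) by (auto simp: card_le_Suc_iff numeral_eq_Suc)
  then have stable: "{a, b} \<in> stable_sets d E" "{a, c} \<in> stable_sets d E" "{a} \<in> stable_sets d E"
    "{a, b, c} \<in> stable_sets d E"
    using stable_set_subset[OF S(1)] by auto
  have "(var {a, b} * var {a, c} - var {a} * var {a, b, c} :: (nat set, 'k) mpoly) \<in> IG d E"
    using abc(2) by (intro quadratic_binomial_in_IG stable) auto
  then have "(var {a, b} * var {a, c} - var {a} * var {a, b, c} :: (nat set, 'k) mpoly) \<in> IG2 d E"
    unfolding IG2_def by (intro ideal_gen_base[OF RG_subring]) (simp add: homogeneous_quadratic_binomial)
  moreover have "(var {a, b} * var {a, c} - var {a} * var {a, b, c} :: (nat set, 'k) mpoly) \<notin> JG d E"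
    unfolding JG_eq_ideal_gen
  proof (rule quadratic_binomial_notin_ideal_gen)
    show "\<not> (({a} = {a, b} \<and> {a, b, c} = {a, c}) \<or> ({a} = {a, c} \<and> {a, b, c} = {a, b}))"
      using abc(2) by (auto simp: doubleton_eq_iff)
    fix g assume "g \<in> (J_binomials d E :: (nat set, 'k) mpoly set)"
    then obtain S1 S2 S3 S4 where "g = var S1 * var S2 - var S3 * var S4" "S1 \<inter> S2 = {}" "S3 \<inter> S4 = {}"
      unfolding J_binomials_def by blast
    then show "\<exists>S1 S2 S3 S4. g = var S1 * var S2 - var S3 * var S4 \<and>
        \<not> ((S1 = {a, b} \<and> S2 = {a, c}) \<or> (S1 = {a, c} \<and> S2 = {a, b})) \<and>
        \<not> ((S3 = {a, b} \<and> S4 = {a, c}) \<or> (S3 = {a, c} \<and> S4 = {a, b}))"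
      by blast
  qed
  ultimately show ?thesis by blast
qed

lemma IG2_eq_JG_iff:
  "(IG2 d E :: (nat set, 'k::comm_ring_1) mpoly set) = JG d E \<longleftrightarrow> (\<forall>S\<in>stable_sets d E. card S \<le> 2)"
proof
  assume eq: "(IG2 d E :: (nat set, 'k) mpoly set) = JG d E"
  show "\<forall>S\<in>stable_sets d E. card S \<le> 2"
  proof
    fix S assume "S \<in> stable_sets d E"
    then show "card S \<le> 2" using IG2_neq_JG[of S d E, where 'k = 'k] eq by linarith
  qed
next
  assume "\<forall>S\<in>stable_sets d E. card S \<le> 2"
  then show "(IG2 d E :: (nat set, 'k) mpoly set) = JG d E"
    by (intro subset_antisym IG2_subset_JG JG_subset_IG2)
qed

section \<open>J_G versus L_G\<close>

lemma L_binomial_union_in_LG: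
  assumes "S1 \<inter> S2 = {}" "S1 \<union> S2 \<in> stable_sets d E" "card (S1 \<union> S2) \<le> 3"
  shows "(var S1 * var S2 - var (S1 \<union> S2) * var {} :: (nat set, 'k::comm_ring_1) mpoly) \<in> LG d E"
proof -
  have small_right: "(var A * var B - var (A \<union> B) * var {} :: (nat set, 'k) mpoly) \<in> LG d E"
    if AB: "A \<inter> B = {}" "A \<union> B \<in> stable_sets d E" and B: "card B \<le> 1" "finite B" for A B
  proof (cases "B = {}")
    case True
    then show ?thesis using LG_ideal[of d E, where 'k = 'k] by (simp add: is_ideal_in_def)
  next
    case False
    then obtain i where i: "B = {i}" using B by (metis card_0_eq card_1_singletonE le_Suc_eq One_nat_def le_zero_eq)
    then have "A = (A \<union> B) - {i}" using AB(1) by auto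
    then show ?thesis using L_binomial_in_LG[OF AB(2), of i, where 'k = 'k] i by simp
  qed
  have fin: "finite S1" "finite S2" using assms(2) stable_set_finite by auto
  then have "card S1 + card S2 \<le> 3" using assms(1,3) by (simp add: card_Un_disjoint)
  then consider "card S2 \<le> 1" | "card S1 \<le> 1" by linarith
  then show ?thesis
  proof cases
    case 1
    then show ?thesis using small_right[OF assms(1,2) _ fin(2)] by blast
  next
    case 2
    then have "(var S2 * var S1 - var (S2 \<union> S1) * var {} :: (nat set, 'k) mpoly) \<in> LG d E"
      using assms(1,2) fin(1) by (intro small_right) (auto simp: Un_commute Int_commute)
    then show ?thesis by (simp add: mult.commute Un_commute)
  qed
qed

text \<open>If S1 \<union> S2 is not stable, it contains an edge pq with p in S1 and q in S2; then transitivity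
  of non-adjacency forbids a stable subset of S1 \<union> S2 to meet both S1 and S2, so {S3, S4} = {S1, S2}.\<close>

lemma J_binomial_in_LG:
  assumes G: "simple_graph_on d E" and trans: "transp_on {1..d} (\<lambda>i j. {i, j} \<notin> E)"
    and small: "\<forall>S\<in>stable_sets d E. card S \<le> 3"
    and S: "S1 \<in> stable_sets d E" "S2 \<in> stable_sets d E" "S3 \<in> stable_sets d E" "S4 \<in> stable_sets d E"
    and disj: "S1 \<inter> S2 = {}" "S3 \<inter> S4 = {}" and union: "S1 \<union> S2 = S3 \<union> S4"
  shows "(var S1 * var S2 - var S3 * var S4 :: (nat set, 'k::comm_ring_1) mpoly) \<in> LG d E"
proof (cases "S1 \<union> S2 \<in> stable_sets d E")
  case True
  then have "(var S1 * var S2 - var (S1 \<union> S2) * var {}) - (var S3 * var S4 - var (S3 \<union> S4) * var {})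
      \<in> (LG d E :: (nat set, 'k) mpoly set)"
    using small disj union
    by (intro ideal_diff[OF RG_subring LG_ideal] L_binomial_union_in_LG) simp_all
  then show ?thesis using union by simp
next
  case False
  have range: "S1 \<union> S2 \<subseteq> {1..d}" using S(1,2) by (auto simp: stable_sets_def)
  then obtain p q where pq: "p \<in> S1 \<union> S2" "q \<in> S1 \<union> S2" "{p, q} \<in> E"
    using False unfolding stable_set_iff[OF G] by blast
  have "\<not> (p \<in> S1 \<and> q \<in> S1)" "\<not> (p \<in> S2 \<and> q \<in> S2)"
    using pq(3) S(1,2) unfolding stable_set_iff[OF G] by blast+
  then obtain p' q' where p'q': "p' \<in> S1" "q' \<in> S2" "{p', q'} \<in> E"
    using pq by (metis UnE insert_commute)
  have split: "S \<subseteq> S1 \<or> S \<subseteq> S2" if stable: "S \<in> stable_sets d E" and sub: "S \<subseteq> S1 \<union> S2" for S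
  proof (rule ccontr)
    assume "\<not> (S \<subseteq> S1 \<or> S \<subseteq> S2)"
    then obtain x y where xy: "x \<in> S" "x \<in> S1" "y \<in> S" "y \<in> S2" using sub by blast
    have "{p', x} \<notin> E" "{x, y} \<notin> E" "{y, q'} \<notin> E"
      using S(1,2) stable p'q'(1,2) xy unfolding stable_set_iff[OF G] by blast+
    moreover have "p' \<in> {1..d}" "x \<in> {1..d}" "y \<in> {1..d}" "q' \<in> {1..d}"
      using range p'q'(1,2) xy(2,4) by blast+
    ultimately have "{p', q'} \<notin> E" using trans unfolding transp_on_def by meson
    then show False using p'q'(3) by blast
  qed
  have "S3 \<subseteq> S1 \<or> S3 \<subseteq> S2" "S4 \<subseteq> S1 \<or> S4 \<subseteq> S2"
    using split S(3,4) union by blast+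
  then have "(S1 = S3 \<and> S2 = S4) \<or> (S1 = S4 \<and> S2 = S3)"
    using union disj p'q'(1,2) by blast
  then have "(var S1 * var S2 - var S3 * var S4 :: (nat set, 'k) mpoly) = 0"
    by (auto simp: mult.commute)
  then show ?thesis using LG_ideal[of d E, where 'k = 'k] by (simp add: is_ideal_in_def)
qed

lemma JG_subset_LG:
  assumes "simple_graph_on d E" "transp_on {1..d} (\<lambda>i j. {i, j} \<notin> E)"
    "\<forall>S\<in>stable_sets d E. card S \<le> 3"
  shows "JG d E \<subseteq> (LG d E :: (nat set, 'k::comm_ring_1) mpoly set)"
  unfolding JG_eq_ideal_gen
proof (rule ideal_gen_least[OF LG_ideal], rule subsetI)
  fix g :: "(nat set, 'k) mpoly" assume "g \<in> J_binomials d E"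
  then obtain S1 S2 S3 S4 where "g = var S1 * var S2 - var S3 * var S4"
    "S1 \<in> stable_sets d E" "S2 \<in> stable_sets d E" "S3 \<in> stable_sets d E" "S4 \<in> stable_sets d E"
    "S1 \<inter> S2 = {}" "S3 \<inter> S4 = {}" "S1 \<union> S2 = S3 \<union> S4"
    unfolding J_binomials_def by blast
  then show "g \<in> LG d E" using J_binomial_in_LG[OF assms] by blast
qed

text \<open>The last two hypotheses say that the monomial x_S1 x_S2 occurs in no generator of L_G, so its
  coefficient separates the generator x_S1 x_S2 - x_S3 x_S4 of J_G from L_G.\<close>

lemma JG_neq_LG:
  assumes S: "S1 \<in> stable_sets d E" "S2 \<in> stable_sets d E" "S3 \<in> stable_sets d E" "S4 \<in> stable_sets d E"
    and disj: "S1 \<inter> S2 = {}" "S3 \<inter> S4 = {}" and union: "S1 \<union> S2 = S3 \<union> S4"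
    and distinct: "\<not> ((S3 = S1 \<and> S4 = S2) \<or> (S3 = S2 \<and> S4 = S1))"
    and nonempty: "S1 \<noteq> {}" "S2 \<noteq> {}"
    and not_L: "S1 \<union> S2 \<in> stable_sets d E \<Longrightarrow> 2 \<le> card S1 \<and> 2 \<le> card S2"
  shows "JG d E \<noteq> (LG d E :: (nat set, 'k::comm_ring_1) mpoly set)"
proof -
  have "(var S1 * var S2 - var S3 * var S4 :: (nat set, 'k) mpoly) \<in> JG d E"
    using S disj union by (rule J_binomial_in_JG)
  moreover have "(var S1 * var S2 - var S3 * var S4 :: (nat set, 'k) mpoly) \<notin> LG d E"
    unfolding LG_eq_ideal_gen using distinct
  proof (rule quadratic_binomial_notin_ideal_gen)
    fix g assume "g \<in> (L_binomials d E :: (nat set, 'k) mpoly set)"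
    then obtain i S where g: "g = var (S - {i}) * var {i} - var S * var {}"
      and L: "S \<in> stable_sets d E" "i \<in> S" "2 \<le> card S"
      unfolding L_binomials_def by blast
    have "\<not> ((S - {i} = S1 \<and> {i} = S2) \<or> (S - {i} = S2 \<and> {i} = S1))"
    proof
      assume "(S - {i} = S1 \<and> {i} = S2) \<or> (S - {i} = S2 \<and> {i} = S1)"
      then have "S = S1 \<union> S2" "card S1 = 1 \<or> card S2 = 1" using L(2) by auto
      then show False using not_L L(1) by auto
    qed
    moreover have "\<not> ((S = S1 \<and> {} = S2) \<or> (S = S2 \<and> {} = S1))" using nonempty by blast
    ultimately show "\<exists>T1 T2 T3 T4. g = var T1 * var T2 - var T3 * var T4 \<and>
        \<not> ((T1 = S1 \<and> T2 = S2) \<or> (T1 = S2 \<and> T2 = S1)) \<and> \<not> ((T3 = S1 \<and> T4 = S2) \<or> (T3 = S2 \<and> T4 = S1))"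
      unfolding g by blast
  qed
  ultimately show ?thesis by blast
qed

lemma JG_neq_LG_if_path_of_nonedges:
  assumes G: "simple_graph_on d E" and ijl: "i \<in> {1..d}" "j \<in> {1..d}" "l \<in> {1..d}"
    and nonadj: "{i, j} \<notin> E" "{j, l} \<notin> E" and il: "{i, l} \<in> E"
  shows "JG d E \<noteq> (LG d E :: (nat set, 'k::comm_ring_1) mpoly set)"
proof -
  have "i \<noteq> l" "i \<noteq> j" "j \<noteq> l" using nonadj il singleton_notin_edges[OF G] by auto
  have stable: "{i, j} \<in> stable_sets d E" "{l} \<in> stable_sets d E" "{j, l} \<in> stable_sets d E"
    "{i} \<in> stable_sets d E"
    using ijl nonadj by (simp_all add: doubleton_stable_set[OF G] singleton_stable_set[OF G])
  have "{i, j} \<union> {l} \<notin> stable_sets d E" using il unfolding stable_set_iff[OF G] by blast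
  then show ?thesis
  proof (intro JG_neq_LG[OF stable] impI)
  qed (use \<open>i \<noteq> l\<close> \<open>i \<noteq> j\<close> \<open>j \<noteq> l\<close> in \<open>auto simp: doubleton_eq_iff\<close>)
qed

lemma JG_neq_LG_if_four_stable:
  assumes S: "S \<in> stable_sets d E" "4 \<le> card S"
  shows "JG d E \<noteq> (LG d E :: (nat set, 'k::comm_ring_1) mpoly set)"
proof -
  obtain a b c e where abce: "{a, b, c, e} \<subseteq> S" "distinct [a, b, c, e]"
    using S(2) by (auto simp: card_le_Suc_iff numeral_eq_Suc)
  then have "{a, b} \<in> stable_sets d E" "{c, e} \<in> stable_sets d E" "{a, c} \<in> stable_sets d E"
    "{b, e} \<in> stable_sets d E"
    using stable_set_subset[OF S(1)] by auto
  then show ?thesis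
  proof (rule JG_neq_LG)
  qed (use abce(2) in \<open>auto simp: doubleton_eq_iff\<close>)
qed

lemma JG_eq_LG_iff:
  assumes G: "simple_graph_on d E"
  shows "JG d E = (LG d E :: (nat set, 'k::comm_ring_1) mpoly set) \<longleftrightarrow>
    transp_on {1..d} (\<lambda>i j. {i, j} \<notin> E) \<and> (\<forall>S\<in>stable_sets d E. card S \<le> 3)"
proof
  assume eq: "JG d E = (LG d E :: (nat set, 'k) mpoly set)"
  have "transp_on {1..d} (\<lambda>i j. {i, j} \<notin> E)"
  proof (rule transp_onI, rule ccontr)
    fix i j l assume "i \<in> {1..d}" "j \<in> {1..d}" "l \<in> {1..d}" "{i, j} \<notin> E" "{j, l} \<notin> E"
      and "\<not> {i, l} \<notin> E"
    then show False using JG_neq_LG_if_path_of_nonedges[OF G, where 'k = 'k] eq by blast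
  qed
  moreover have "card S \<le> 3" if "S \<in> stable_sets d E" for S
    using JG_neq_LG_if_four_stable[OF that, where 'k = 'k] eq by linarith
  ultimately show "transp_on {1..d} (\<lambda>i j. {i, j} \<notin> E) \<and> (\<forall>S\<in>stable_sets d E. card S \<le> 3)"
    by blast
next
  assume "transp_on {1..d} (\<lambda>i j. {i, j} \<notin> E) \<and> (\<forall>S\<in>stable_sets d E. card S \<le> 3)"
  then show "JG d E = (LG d E :: (nat set, 'k) mpoly set)"
    using JG_subset_LG[OF G] LG_subset_JG by blast
qed

theorem proposition4p3:
  fixes d :: nat and E :: "nat set set"
  assumes "simple_graph_on d E"
  shows "(prime_ideal_in (RG d E) (IG2 d E :: (nat set, 'k::field) mpoly set) \<longleftrightarrow> IG2 d E = (IG d E :: (nat set, 'k) mpoly set))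
       \<and> (prime_ideal_in (RG d E) (JG d E :: (nat set, 'k) mpoly set) \<longleftrightarrow> JG d E = (IG d E :: (nat set, 'k) mpoly set))
       \<and> (prime_ideal_in (RG d E) (LG d E :: (nat set, 'k) mpoly set) \<longleftrightarrow> LG d E = (IG d E :: (nat set, 'k) mpoly set))
       \<and> ((IG d E :: (nat set, 'k) mpoly set) = IG2 d E \<longleftrightarrow> generated_by_quadratic_binomials d E (IG d E :: (nat set, 'k) mpoly set))
       \<and> ((IG2 d E :: (nat set, 'k) mpoly set) = JG d E \<longleftrightarrow> \<not> complement_has_triangle d E)
       \<and> ((JG d E :: (nat set, 'k) mpoly set) = LG d E \<longleftrightarrow>
            (\<exists>P. complete_multipartite_wrt d E P \<and> (\<forall>V\<in>P. card V \<le> 3)))"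
proof (intro conjI)
  have L_J: "LG d E \<subseteq> (JG d E :: (nat set, 'k) mpoly set)" by (rule LG_subset_JG)
  have J_IG2: "JG d E \<subseteq> (IG2 d E :: (nat set, 'k) mpoly set)" by (rule JG_subset_IG2)
  have IG2_IG: "IG2 d E \<subseteq> (IG d E :: (nat set, 'k) mpoly set)" by (rule IG2_subset_IG)
  show "prime_ideal_in (RG d E) (IG2 d E :: (nat set, 'k) mpoly set) \<longleftrightarrow>
      IG2 d E = (IG d E :: (nat set, 'k) mpoly set)"
    by (rule prime_ideal_between_LG_IG_iff[OF assms]) (use L_J J_IG2 IG2_IG in blast)+
  show "prime_ideal_in (RG d E) (JG d E :: (nat set, 'k) mpoly set) \<longleftrightarrow>
      JG d E = (IG d E :: (nat set, 'k) mpoly set)"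
    by (rule prime_ideal_between_LG_IG_iff[OF assms]) (use L_J J_IG2 IG2_IG in blast)+
  show "prime_ideal_in (RG d E) (LG d E :: (nat set, 'k) mpoly set) \<longleftrightarrow>
      LG d E = (IG d E :: (nat set, 'k) mpoly set)"
    by (rule prime_ideal_between_LG_IG_iff[OF assms]) (use L_J J_IG2 IG2_IG in blast)+
  show "(IG d E :: (nat set, 'k) mpoly set) = IG2 d E \<longleftrightarrow>
      generated_by_quadratic_binomials d E (IG d E :: (nat set, 'k) mpoly set)"
    by (rule IG_eq_IG2_iff)
  show "(IG2 d E :: (nat set, 'k) mpoly set) = JG d E \<longleftrightarrow> \<not> complement_has_triangle d E"
    unfolding IG2_eq_JG_iff complement_has_triangle_iff[OF assms] by (auto simp: not_le)
  show "(JG d E :: (nat set, 'k) mpoly set) = LG d E \<longleftrightarrow>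
      (\<exists>P. complete_multipartite_wrt d E P \<and> (\<forall>V\<in>P. card V \<le> 3))"
    unfolding JG_eq_LG_iff[OF assms] ex_complete_multipartite_iff[OF assms] ..
qed

end
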